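(* Let $\mathcal H_S,\mathcal H_E$ be finite-dimensional Hilbert spaces, $\hat H_S,\hat V_S$ Hermitian on $\mathcal H_S$, $\hat H_E,\hat V_E$ Hermitian on $\mathcal H_E$, $\hat\rho_S,\hat\rho_E$ density matrices, and $\hat H_{SE}=\hat H_S\otimes\hat{\mathds 1}+\hat V_S\otimes\hat V_E+\hat{\mathds 1}\otimes\hat H_E$. Then for every $t\ge 0$, $$\hat\rho_S^I(t):=e^{it\hat H_S}\,\mathrm{tr}_E\!\left(e^{-it\hat H_{SE}}\hat\rho_S\otimes\hat\rho_E\,e^{it\hat H_{SE}}\right)e^{-it\hat H_S} =\sum_{k=0}^\infty(-i)^k\int_0^t\!dt_1\int_0^{t_1}\!dt_2\cdots\int_0^{t_{k-1}}\!dt_k\sum_{\boldsymbol\xi,\boldsymbol\eta\in\Omega_{\hat V}^{\times k}}\delta_{\xi_1,\eta_1}\,q_E^{(k)}(\boldsymbol\xi\boldsymbol\eta\mathbf t)\,\mathscr W_S(\xi_1\eta_1t_1)\circ\mathscr W_S(\xi_2\eta_2t_2)\circ\cdots\circ\mathscr W_S(\xi_k\eta_kt_k)\,\hat\rho_S,$$ where the $k=0$ term is $\hat\rho_S$ (and the series converges).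
   Context: Units with $\hbar=1$. Write the spectral decomposition $\hat V_E=\sum_n v_n|n\rangle\langle n|$ with $\{|n\rangle\}$ an orthonormal eigenbasis of $\mathcal H_E$, and let $\Omega_{\hat V}$ be the set of distinct eigenvalues of $\hat V_E$. Let $\hat V_S(t)=e^{it\hat H_S}\hat V_Se^{-it\hat H_S}$ and, for $\xi,\eta\in\Omega_{\hat V}$, define the linear map on operators of $\mathcal H_S$: $\mathscr W_S(\xi\eta t)\hat A=\tfrac12(\xi+\eta)(\hat V_S(t)\hat A-\hat A\hat V_S(t))+\tfrac12(\xi-\eta)(\hat V_S(t)\hat A+\hat A\hat V_S(t))$. Let $\hat\rho_E(t)=e^{-it\hat H_E}\hat\rho_Ee^{it\hat H_E}$ and define the propagator $T_t(nm|n'm')=\mathrm{tr}_E\big(|m\rangle\langle n|e^{-it\hat H_E}|n'\rangle\langle m'|e^{it\hat H_E}\big)=\langle n|e^{-it\hat H_E}|n'\rangle\overline{\langle m|e^{-it\hat H_E}|m'\rangle}$. For $k\ge1$, $t_1>t_2>\dots>t_k\ge0$, $\boldsymbol\xi=(\xi_1,\dots,\xi_k),\boldsymbol\eta=(\eta_1,\dots,\eta_k)\in\Omega_{\hat V}^{\times k}$, the joint quasi-probability is $$q_E^{(k)}(\boldsymbol\xi\boldsymbol\eta\mathbf t)=\Big(\prod_{l=1}^k\sum_{n_l:\,v_{n_l}=\xi_l}\ \sum_{m_l:\,v_{m_l}=\eta_l}\Big)\delta_{n_1,m_1}\langle n_k|\hat\rho_E(t_k)|m_k\rangle\prod_{l=1}^{k-1}T_{t_l-t_{l+1}}(n_lm_l|n_{l+1}m_{l+1}).$$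 *)

theory Defs
  imports "HOL-Analysis.Analysis"
begin

text \<open>Operators on a finite-dimensional Hilbert space with orthonormal basis indexed by a
finite type 'a are represented by matrices complex^'a^'a (row index first).\<close>

type_synonym 'a op = "complex^'a^'a"

definition madj :: "'a::finite op \<Rightarrow> 'a op" where
  "madj A = (\<chi> i j. cnj (A$j$i))"

definition hermitian :: "'a::finite op \<Rightarrow> bool" where
  "hermitian A \<longleftrightarrow> madj A = A"

definition mtrace :: "'a::finite op \<Rightarrow> complex" where
  "mtrace A = (\<Sum>i\<in>UNIV. A$i$i)"

definition density :: "'a::finite op \<Rightarrow> bool" where
  "density A \<longleftrightarrow> hermitian A \<and>
     (\<forall>x::complex^'a. 0 \<le> Re (\<Sum>i\<in>UNIV. \<Sum>j\<in>UNIV. cnj (x$i) * A$i$j * x$j)) \<and>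
     mtrace A = 1"

definition msc :: "complex \<Rightarrow> 'a::finite op \<Rightarrow> 'a op" where
  "msc c A = (\<chi> i j. c * A$i$j)"

primrec mpow :: "'a::finite op \<Rightarrow> nat \<Rightarrow> 'a op" where
  "mpow A 0 = mat 1"
| "mpow A (Suc k) = A ** mpow A k"

definition mexp :: "'a::finite op \<Rightarrow> 'a op" where
  "mexp A = (\<chi> i j. (\<Sum>k. (mpow A k)$i$j / of_nat (fact k)))"

definition kron :: "'s::finite op \<Rightarrow> 'e::finite op \<Rightarrow> ('s \<times> 'e) op" where
  "kron A B = (\<chi> p q. A$(fst p)$(fst q) * B$(snd p)$(snd q))"

definition ptraceE :: "('s::finite \<times> 'e::finite) op \<Rightarrow> 's op" where
  "ptraceE X = (\<chi> i j. (\<Sum>e\<in>UNIV. X$(i,e)$(j,e)))"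

definition HSE :: "'s::finite op \<Rightarrow> 's op \<Rightarrow> 'e::finite op \<Rightarrow> 'e op \<Rightarrow> ('s \<times> 'e) op" where
  "HSE HS VS HE VE = kron HS (mat 1) + kron VS VE + kron (mat 1) HE"

definition evol :: "'a::finite op \<Rightarrow> real \<Rightarrow> 'a op" where
  "evol H t = mexp (msc (- (\<i> * of_real t)) H)"

definition rhoSI :: "'s::finite op \<Rightarrow> 's op \<Rightarrow> 'e::finite op \<Rightarrow> 'e op \<Rightarrow> 's op \<Rightarrow> 'e op
    \<Rightarrow> real \<Rightarrow> 's op" where
  "rhoSI HS VS HE VE rhoS rhoE t =
     evol HS (-t) ** ptraceE (evol (HSE HS VS HE VE) t ** kron rhoS rhoE ** evol (HSE HS VS HE VE) (-t))
       ** evol HS t"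

definition braket :: "complex^'a \<Rightarrow> 'a::finite op \<Rightarrow> complex^'a \<Rightarrow> complex" where
  "braket x A y = (\<Sum>i\<in>UNIV. \<Sum>j\<in>UNIV. cnj (x$i) * A$i$j * y$j)"

definition ketbra :: "complex^'a::finite \<Rightarrow> complex^'a \<Rightarrow> 'a op" where
  "ketbra x y = (\<chi> i j. x$i * cnj (y$j))"

definition orthonormal_family :: "('n \<Rightarrow> complex^'a::finite) \<Rightarrow> bool" where
  "orthonormal_family b \<longleftrightarrow>
     (\<forall>n m. (\<Sum>i\<in>UNIV. cnj (b n $ i) * b m $ i) = (if n = m then 1 else 0))"

definition VSt :: "'s::finite op \<Rightarrow> 's op \<Rightarrow> real \<Rightarrow> 's op" where
  "VSt HS VS t = evol HS (-t) ** VS ** evol HS t"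

definition WS :: "'s::finite op \<Rightarrow> 's op \<Rightarrow> real \<Rightarrow> real \<Rightarrow> real \<Rightarrow> 's op \<Rightarrow> 's op" where
  "WS HS VS xi eta t A =
     msc (of_real ((xi + eta) / 2)) (VSt HS VS t ** A - A ** VSt HS VS t)
   + msc (of_real ((xi - eta) / 2)) (VSt HS VS t ** A + A ** VSt HS VS t)"

text \<open>Composition W_S(xi_1 eta_1 t_1) o ... o W_S(xi_k eta_k t_k) applied to A
 (lists are indexed from 0: the list head corresponds to index 1).\<close>
fun Wcomp :: "'s::finite op \<Rightarrow> 's op \<Rightarrow> real list \<Rightarrow> real list \<Rightarrow> real list \<Rightarrow> 's op \<Rightarrow> 's op" where
  "Wcomp HS VS (x # xs) (y # ys) (s # ss) A = WS HS VS x y s (Wcomp HS VS xs ys ss A)"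
| "Wcomp HS VS _ _ _ A = A"

definition Tprop :: "'e::finite op \<Rightarrow> ('e \<Rightarrow> complex^'e) \<Rightarrow> real \<Rightarrow> 'e \<Rightarrow> 'e \<Rightarrow> 'e \<Rightarrow> 'e \<Rightarrow> complex" where
  "Tprop HE b t n m n' m' = braket (b n) (evol HE t) (b n') * cnj (braket (b m) (evol HE t) (b m'))"

text \<open>Joint quasi-probability q_E^(k)(xi eta t), k = length xs (used for k \<ge> 1).\<close>
definition qE :: "'e::finite op \<Rightarrow> 'e op \<Rightarrow> ('e \<Rightarrow> complex^'e) \<Rightarrow> ('e \<Rightarrow> real)
    \<Rightarrow> real list \<Rightarrow> real list \<Rightarrow> real list \<Rightarrow> complex" where
  "qE HE rhoE b v xs ys ts =
    (let k = length xs in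
     \<Sum>ns\<in>{ns. length ns = k \<and> (\<forall>l<k. v (ns!l) = xs!l)}.
     \<Sum>ms\<in>{ms. length ms = k \<and> (\<forall>l<k. v (ms!l) = ys!l)}.
       (if ns!0 = ms!0 then 1 else 0)
       * braket (b (ns!(k-1))) (evol HE (ts!(k-1)) ** rhoE ** evol HE (-(ts!(k-1)))) (b (ms!(k-1)))
       * (\<Prod>l<k-1. Tprop HE b (ts!l - ts!(l+1)) (ns!l) (ms!l) (ns!(l+1)) (ms!(l+1))))"

text \<open>Ordered iterated integral
  iterint k s F = \<integral>_0^s dt_1 \<integral>_0^{t_1} dt_2 ... \<integral>_0^{t_{k-1}} dt_k F [t_1,...,t_k].\<close>
primrec iterint :: "nat \<Rightarrow> real \<Rightarrow> (real list \<Rightarrow> complex) \<Rightarrow> complex" where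
  "iterint 0 s F = F []"
| "iterint (Suc k) s F = integral {0..s} (\<lambda>u. iterint k u (\<lambda>ts. F (u # ts)))"

definition dyson_term :: "'s::finite op \<Rightarrow> 's op \<Rightarrow> 'e::finite op \<Rightarrow> 'e op \<Rightarrow> 's op \<Rightarrow> 'e op
    \<Rightarrow> ('e \<Rightarrow> complex^'e) \<Rightarrow> ('e \<Rightarrow> real) \<Rightarrow> real \<Rightarrow> nat \<Rightarrow> 's \<Rightarrow> 's \<Rightarrow> complex" where
  "dyson_term HS VS HE VE rhoS rhoE b v t k i j =
    (if k = 0 then rhoS$i$j else
     (- \<i>) ^ k * iterint k t (\<lambda>ts.
        \<Sum>xs\<in>{xs. length xs = k \<and> set xs \<subseteq> range v}.
        \<Sum>ys\<in>{ys. length ys = k \<and> set ys \<subseteq> range v}.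
          (if xs!0 = ys!0 then 1 else 0) * qE HE rhoE b v xs ys ts
          * (Wcomp HS VS xs ys ts rhoS)$i$j))"

end

theory Submission
  imports Defs
begin

text \<open>In the interaction picture the state P(t) = U0(-t) exp(-itH) \<rho> exp(itH) U0(t), where
  U0(t) = exp(-itH_S) \<otimes> exp(-itH_E), solves the linear Volterra equation
  P(t) = \<rho> - i \<integral>_0^t [V_S(s) \<otimes> V_E(s), P(s)] ds.  Its Picard iterates converge with a
  remainder of order (Ct)^k/k!, and the k-th iterate is the k-fold time-ordered integral of
  nested commutators.  The partial trace of a nested commutator is computed in the moving
  eigenbasis exp(isH_E) b_n of V_E(s): on these eigenvectors the commutator with
  V_S(s) \<otimes> V_E(s) acts on the system block as W_S(v_n, v_m, s), and passing from the basis at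
  time t_l to the one at t_(l+1) produces the propagator T.  Grouping basis labels by
  eigenvalue turns the resulting sum into the one over q_E.\<close>

lemma matrix_add_rdistrib: "((A::'a::finite op) + B) ** C = A ** C + B ** C"
  by (simp add: vec_eq_iff matrix_matrix_mult_def sum.distrib algebra_simps)

lemma matrix_diff_rdistrib: "((A::'a::finite op) - B) ** C = A ** C - B ** C"
  by (simp add: vec_eq_iff matrix_matrix_mult_def sum_subtractf algebra_simps)

lemma matrix_mult_bounded_bilinear: "bounded_bilinear ((**) :: 'a::finite op \<Rightarrow> 'a op \<Rightarrow> 'a op)"
proof -
  have "bilinear ((**) :: 'a op \<Rightarrow> 'a op \<Rightarrow> 'a op)"
    unfolding bilinear_def
    by (auto intro!: linearI simp: matrix_add_ldistrib matrix_add_rdistrib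
        matrix_scalar_ac scalar_matrix_assoc)
  thus ?thesis using bilinear_conv_bounded_bilinear by blast
qed

lemma msc_matrix_mult_left: "msc c A ** (B::'a::finite op) = msc c (A ** B)"
  by (simp add: vec_eq_iff matrix_matrix_mult_def msc_def sum_distrib_left algebra_simps)

lemma msc_matrix_mult_right: "(A::'a::finite op) ** msc c B = msc c (A ** B)"
  by (simp add: vec_eq_iff matrix_matrix_mult_def msc_def sum_distrib_left algebra_simps)

lemma msc_add: "msc c (A + B) = msc c A + msc c B"
  by (simp add: vec_eq_iff msc_def algebra_simps)

lemma msc_diff: "msc c (A - B) = msc c A - msc c B"
  by (simp add: vec_eq_iff msc_def algebra_simps)

lemma msc_msc: "msc c (msc d A) = msc (c * d) A"
  by (simp add: vec_eq_iff msc_def)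

lemma msc_sum: "msc c (\<Sum>n\<in>A. f n) = (\<Sum>n\<in>A. msc c (f n))"
  by (simp add: vec_eq_iff msc_def sum_component sum_distrib_left)

lemma scaleR_eq_msc: "r *\<^sub>R A = msc (of_real r) A"
  by (simp add: vec_eq_iff msc_def scaleR_conv_of_real[where 'a=complex])

lemma bounded_linear_msc: "bounded_linear (msc c :: 'a::finite op \<Rightarrow> 'a op)"
proof -
  have "linear (msc c :: 'a op \<Rightarrow> 'a op)"
    by (rule linearI) (simp_all add: msc_add scaleR_eq_msc msc_msc mult.commute)
  thus ?thesis using linear_conv_bounded_linear by blast
qed

lemma madj_matrix_mult: "madj ((A::'a::finite op) ** B) = madj B ** madj A"
  by (simp add: vec_eq_iff madj_def matrix_matrix_mult_def mult.commute)

lemma madj_madj: "madj (madj A) = A"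
  by (simp add: vec_eq_iff madj_def)

lemma mpow_Suc_right: "mpow H (Suc k) = mpow H k ** H"
  by (induction k) (auto simp: matrix_mul_assoc)

lemma mpow_msc: "mpow (msc c H) k = msc (c ^ k) (mpow H k)"
proof (induction k)
  case 0
  show ?case by (simp add: msc_def vec_eq_iff mat_def)
next
  case (Suc k)
  show ?case
    by (simp add: Suc msc_matrix_mult_left msc_matrix_mult_right msc_msc mult.commute)
qed

lemma madj_mpow: "hermitian H \<Longrightarrow> madj (mpow H k) = mpow H k"
proof (induction k)
  case 0
  show ?case by (simp add: vec_eq_iff madj_def mat_def)
next
  case (Suc k)
  then have "madj (mpow H (Suc k)) = mpow H k ** H"
    by (simp add: madj_matrix_mult hermitian_def)
  thus ?case by (simp only: mpow_Suc_right)
qed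

lemma vec_has_vector_derivativeI:
  fixes f :: "real \<Rightarrow> 'a::real_normed_vector^'n::finite"
  assumes "\<And>i. ((\<lambda>x. f x $ i) has_vector_derivative D $ i) (at t within S)"
  shows "(f has_vector_derivative D) (at t within S)"
proof -
  let ?q = "\<lambda>y. (1 / norm (y - t)) *\<^sub>R (f y - (f t + (y - t) *\<^sub>R D))"
  have "((\<lambda>y. ?q y $ i) \<longlongrightarrow> 0) (at t within S)" for i
    using assms[of i] unfolding has_vector_derivative_def has_derivative_within by auto
  hence "((\<lambda>y. \<chi> i. ?q y $ i) \<longlongrightarrow> (\<chi> i. 0)) (at t within S)"
    by (intro tendsto_vec_lambda)
  moreover have "(\<chi> i. 0) = (0::'a^'n)"
    by (simp add: vec_eq_iff)
  ultimately have "(?q \<longlongrightarrow> 0) (at t within S)"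
    by (simp only: vec_lambda_eta)
  thus ?thesis
    unfolding has_vector_derivative_def has_derivative_within
    by (auto intro: bounded_linear_scaleR_left)
qed

subsection \<open>The matrix exponential\<close>

definition entry_norm_sum :: "'a::finite op \<Rightarrow> real" where
  "entry_norm_sum H = (\<Sum>i\<in>UNIV. \<Sum>j\<in>UNIV. cmod (H$i$j))"

lemma entry_norm_sum_nonneg: "0 \<le> entry_norm_sum H"
  unfolding entry_norm_sum_def by (intro sum_nonneg) auto

lemma row_norm_sum_le: "(\<Sum>l\<in>UNIV. cmod (H$i$l)) \<le> entry_norm_sum H"
  unfolding entry_norm_sum_def by (rule member_le_sum) (auto intro: sum_nonneg)

lemma norm_mpow_entry_le: "cmod (mpow H k $ i $ j) \<le> entry_norm_sum H ^ k"
proof (induction k arbitrary: i j)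
  case 0
  then show ?case by (simp add: mat_def)
next
  case (Suc k)
  have "cmod (mpow H (Suc k) $ i $ j) = cmod (\<Sum>l\<in>UNIV. H$i$l * mpow H k $ l $ j)"
    by (simp add: matrix_matrix_mult_def)
  also have "\<dots> \<le> (\<Sum>l\<in>UNIV. cmod (H$i$l) * entry_norm_sum H ^ k)"
    by (rule order_trans[OF norm_sum]) (auto intro!: sum_mono mult_left_mono Suc simp: norm_mult)
  also have "\<dots> = (\<Sum>l\<in>UNIV. cmod (H$i$l)) * entry_norm_sum H ^ k"
    by (simp add: sum_distrib_right)
  also have "\<dots> \<le> entry_norm_sum H * entry_norm_sum H ^ k"
    by (intro mult_right_mono row_norm_sum_le) (simp add: entry_norm_sum_nonneg)
  finally show ?case by simp
qed

definition evol_coeff :: "'a::finite op \<Rightarrow> 'a \<Rightarrow> 'a \<Rightarrow> nat \<Rightarrow> complex" where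
  "evol_coeff H i j k = (- \<i>)^k * mpow H k $ i $ j / of_nat (fact k)"

lemma summable_evol_coeff: "summable (\<lambda>k. evol_coeff H i j k * z^k)"
proof (rule summable_comparison_test')
  show "summable (\<lambda>k. inverse (fact k) * (entry_norm_sum H * cmod z)^k)"
    by (rule summable_exp)
  fix k :: nat
  have "norm (evol_coeff H i j k * z^k) = cmod (mpow H k $ i $ j) * cmod z ^ k / fact k"
    by (simp add: evol_coeff_def norm_mult norm_divide norm_power)
  also have "\<dots> \<le> entry_norm_sum H ^ k * cmod z ^ k / fact k"
    by (intro divide_right_mono mult_right_mono norm_mpow_entry_le) auto
  finally show "norm (evol_coeff H i j k * z^k) \<le> inverse (fact k) * (entry_norm_sum H * cmod z)^k"
    by (simp add: power_mult_distrib field_simps)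
qed

lemma evol_entry: "evol H t $ i $ j = (\<Sum>k. evol_coeff H i j k * (of_real t)^k)"
proof -
  have "(- (\<i> * of_real t))^k = (- \<i>)^k * (of_real t :: complex)^k" for k
    by (metis minus_mult_left power_mult_distrib)
  thus ?thesis
    unfolding evol_def mexp_def mpow_msc
    by (simp add: msc_def evol_coeff_def power_mult_distrib algebra_simps)
qed

lemma diffs_evol_coeff:
  "diffs (evol_coeff H i j) k = (- \<i>)^(Suc k) * mpow H (Suc k) $ i $ j / of_nat (fact k)"
proof -
  have "of_nat (Suc k) * (x / of_nat (fact (Suc k))) = x / (of_nat (fact k) :: complex)" for x
  proof -
    have nz: "(of_nat (Suc k) :: complex) \<noteq> 0"
      by (simp del: of_nat_Suc)
    have "x / of_nat (fact (Suc k)) = x / (of_nat (Suc k) * (fact k :: complex))"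
      by (subst of_nat_fact, subst fact_Suc, rule refl)
    hence "of_nat (Suc k) * (x / of_nat (fact (Suc k)))
        = (of_nat (Suc k) * x) / (of_nat (Suc k) * (fact k :: complex))"
      by (simp only: times_divide_eq_right)
    also have "\<dots> = x / fact k"
      by (rule mult_divide_mult_cancel_left[OF nz])
    finally show ?thesis by simp
  qed
  thus ?thesis unfolding diffs_def evol_coeff_def by metis
qed

lemma diffs_evol_coeff_left:
  "diffs (evol_coeff H i j) k * z^k = (\<Sum>l\<in>UNIV. (- \<i>) * H$i$l * (evol_coeff H l j k * z^k))"
  unfolding diffs_evol_coeff
  by (simp add: evol_coeff_def matrix_matrix_mult_def sum_distrib_left sum_divide_distrib algebra_simps)

lemma diffs_evol_coeff_right:
  "diffs (evol_coeff H i j) k * z^k = (\<Sum>l\<in>UNIV. (evol_coeff H i l k * z^k) * ((- \<i>) * H$l$j))"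
  unfolding diffs_evol_coeff
  by (simp add: evol_coeff_def mpow_Suc_right[of H k] matrix_matrix_mult_def
      sum_distrib_left sum_distrib_right sum_divide_distrib algebra_simps del: mpow.simps)

abbreviation generator :: "'a::finite op \<Rightarrow> 'a op" where
  "generator H \<equiv> msc (- \<i>) H"

lemma generator_mult_evol:
  "(generator H ** evol H t) $ i $ j = (\<Sum>k. diffs (evol_coeff H i j) k * (of_real t)^k)"
proof -
  have "(generator H ** evol H t) $ i $ j
      = (\<Sum>l\<in>UNIV. (- \<i>) * H$i$l * (\<Sum>k. evol_coeff H l j k * (of_real t)^k))"
    by (simp add: matrix_matrix_mult_def msc_def evol_entry)
  also have "\<dots> = (\<Sum>l\<in>UNIV. \<Sum>k. (- \<i>) * H$i$l * (evol_coeff H l j k * (of_real t)^k))"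
    by (intro sum.cong refl suminf_mult[symmetric] summable_evol_coeff)
  also have "\<dots> = (\<Sum>k. diffs (evol_coeff H i j) k * (of_real t)^k)"
    unfolding diffs_evol_coeff_left
    by (rule suminf_sum[symmetric]) (intro summable_mult summable_evol_coeff)
  finally show ?thesis .
qed

lemma evol_mult_generator:
  "(evol H t ** generator H) $ i $ j = (\<Sum>k. diffs (evol_coeff H i j) k * (of_real t)^k)"
proof -
  have "(evol H t ** generator H) $ i $ j
      = (\<Sum>l\<in>UNIV. (\<Sum>k. evol_coeff H i l k * (of_real t)^k) * ((- \<i>) * H$l$j))"
    by (simp add: matrix_matrix_mult_def msc_def evol_entry)
  also have "\<dots> = (\<Sum>l\<in>UNIV. \<Sum>k. (evol_coeff H i l k * (of_real t)^k) * ((- \<i>) * H$l$j))"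
    by (intro sum.cong refl suminf_mult2 summable_evol_coeff)
  also have "\<dots> = (\<Sum>k. diffs (evol_coeff H i j) k * (of_real t)^k)"
    unfolding diffs_evol_coeff_right
    by (rule suminf_sum[symmetric]) (intro summable_mult2 summable_evol_coeff)
  finally show ?thesis .
qed

lemma generator_commute_evol: "generator H ** evol H t = evol H t ** generator H"
  by (simp add: vec_eq_iff generator_mult_evol evol_mult_generator)

lemma evol_has_vector_derivative:
  "((\<lambda>t. evol H t) has_vector_derivative (generator H ** evol H t)) (at t within S)"
proof (intro vec_has_vector_derivativeI)
  fix i j
  show "((\<lambda>t. evol H t $ i $ j) has_vector_derivative (generator H ** evol H t) $ i $ j) (at t within S)"
    unfolding evol_entry generator_mult_evol
    by (intro has_vector_derivative_real_field termdiffs_strong_converges_everywhere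
        summable_evol_coeff)
qed

lemma evol_zero: "evol H 0 = mat 1"
proof -
  have "evol H 0 $ i $ j = mat 1 $ i $ j" for i j
  proof -
    have "(\<lambda>k. evol_coeff H i j k * (of_real 0)^k) = (\<lambda>k. if k = 0 then mat 1 $ i $ j else 0)"
      by (auto simp: evol_coeff_def)
    thus ?thesis
      unfolding evol_entry using sums_single[of 0 "\<lambda>_. mat 1 $ i $ j"] by (metis sums_unique)
  qed
  thus ?thesis by (simp add: vec_eq_iff)
qed

lemma evol_affine_has_vector_derivative:
  "((\<lambda>t. evol H (c*t + d)) has_vector_derivative c *\<^sub>R (generator H ** evol H (c*t + d))) (at t within S)"
proof -
  have "((\<lambda>t. c*t + d) has_vector_derivative c) (at t within S)"
    by (auto intro!: derivative_eq_intros simp: has_real_derivative_iff_has_vector_derivative[symmetric])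
  from vector_diff_chain_within[OF this evol_has_vector_derivative] show ?thesis
    by (simp add: o_def)
qed

lemma evol_neg_has_vector_derivative:
  "((\<lambda>t. evol H (- t)) has_vector_derivative - (evol H (- t) ** generator H)) (at t within S)"
  using evol_affine_has_vector_derivative[of H "-1" 0 t S] by (simp add: generator_commute_evol)

lemma evol_neg_mult_evol_shift: "evol H (- s) ** evol H (s + u) = evol H u"
proof -
  let ?f = "\<lambda>s. evol H (- s) ** evol H (s + u)"
  have "(?f has_vector_derivative 0) (at x within UNIV)" for x
  proof -
    have "((\<lambda>s. evol H (s + u)) has_vector_derivative generator H ** evol H (x + u)) (at x)"
      using evol_affine_has_vector_derivative[of H 1 u x UNIV] by (simp add: add.commute)
    from bounded_bilinear.has_vector_derivative[OF matrix_mult_bounded_bilinear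
        evol_neg_has_vector_derivative[of H] this]
    have "(?f has_vector_derivative evol H (- x) ** (generator H ** evol H (x + u))
        + - (evol H (- x) ** generator H) ** evol H (x + u)) (at x)" .
    moreover have "evol H (- x) ** (generator H ** evol H (x + u))
        + - (evol H (- x) ** generator H) ** evol H (x + u) = 0"
      by (simp only: matrix_mul_assoc bounded_bilinear.minus_left[OF matrix_mult_bounded_bilinear]
          add.right_inverse)
    ultimately show ?thesis by simp
  qed
  then obtain c where "\<And>x. x \<in> UNIV \<Longrightarrow> ?f x = c"
    using has_vector_derivative_zero_constant[of UNIV ?f] by blast
  hence "?f s = ?f 0" by (metis UNIV_I)
  thus ?thesis by (simp add: evol_zero)
qed

lemma evol_inverse: "evol H (- t) ** evol H t = mat 1"
  using evol_neg_mult_evol_shift[of H t 0] by (simp add: evol_zero)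

lemma evol_inverse': "evol H t ** evol H (- t) = mat 1"
  using evol_inverse[of H "- t"] by simp

lemma evol_add: "evol H (s + u) = evol H s ** evol H u"
proof -
  have "evol H (s + u) = (evol H s ** evol H (- s)) ** evol H (s + u)"
    by (simp add: evol_inverse')
  also have "\<dots> = evol H s ** evol H u"
    by (simp only: matrix_mul_assoc[symmetric] evol_neg_mult_evol_shift)
  finally show ?thesis .
qed

lemma madj_evol:
  assumes "hermitian H"
  shows "madj (evol H t) = evol H (- t)"
proof -
  have "madj (evol H t) $ i $ j = evol H (- t) $ i $ j" for i j
  proof -
    have "(\<lambda>k. evol_coeff H j i k * (of_real t)^k) sums (evol H t $ j $ i)"
      unfolding evol_entry by (rule summable_sums[OF summable_evol_coeff])
    hence "(\<lambda>k. cnj (evol_coeff H j i k * (of_real t)^k)) sums cnj (evol H t $ j $ i)"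
      by (simp only: sums_cnj)
    moreover have "cnj (evol_coeff H j i k * (of_real t)^k) = evol_coeff H i j k * (of_real (- t))^k" for k
    proof -
      have "cnj (mpow H k $ j $ i) = mpow H k $ i $ j"
        using madj_mpow[OF assms, of k] by (simp add: vec_eq_iff madj_def)
      thus ?thesis by (simp add: evol_coeff_def power_mult_distrib[symmetric])
    qed
    ultimately show ?thesis by (simp add: madj_def evol_entry[of H "-t"] sums_iff)
  qed
  thus ?thesis by (simp add: vec_eq_iff)
qed

lemma sum_UNIV_prod:
  "(\<Sum>p\<in>(UNIV::('a::finite \<times> 'b::finite) set). f p) = (\<Sum>a\<in>UNIV. \<Sum>b\<in>UNIV. f (a,b))"
  by (simp add: sum.cartesian_product UNIV_Times_UNIV[symmetric] del: UNIV_Times_UNIV)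

lemma kron_mult: "kron (A::'s::finite op) (B::'e::finite op) ** kron C D = kron (A ** C) (B ** D)"
proof -
  have "(kron A B ** kron C D) $ p $ q = kron (A ** C) (B ** D) $ p $ q" for p q
  proof -
    have "(kron A B ** kron C D) $ p $ q
        = (\<Sum>a\<in>UNIV. \<Sum>b\<in>UNIV. (A $ fst p $ a * C $ a $ fst q) * (B $ snd p $ b * D $ b $ snd q))"
      by (simp add: matrix_matrix_mult_def kron_def sum_UNIV_prod algebra_simps)
    also have "\<dots> = kron (A ** C) (B ** D) $ p $ q"
      by (simp add: matrix_matrix_mult_def kron_def sum_product)
    finally show ?thesis .
  qed
  thus ?thesis by (simp add: vec_eq_iff)
qed

lemma kron_msc_left: "kron (msc c A) B = msc c (kron A B)"
  by (simp add: vec_eq_iff kron_def msc_def)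

lemma kron_msc_right: "kron A (msc c B) = msc c (kron A B)"
  by (simp add: vec_eq_iff kron_def msc_def)

lemma kron_one: "kron (mat 1 :: 's::finite op) (mat 1 :: 'e::finite op) = mat 1"
  by (simp add: vec_eq_iff kron_def mat_def prod_eq_iff)

lemma kron_bounded_bilinear: "bounded_bilinear (kron :: 's::finite op \<Rightarrow> 'e::finite op \<Rightarrow> _)"
proof -
  have "bilinear (kron :: 's op \<Rightarrow> 'e op \<Rightarrow> _)"
    unfolding bilinear_def by (auto intro!: linearI simp: vec_eq_iff kron_def algebra_simps)
  thus ?thesis using bilinear_conv_bounded_bilinear by blast
qed

lemma mult_if_zero:
  "(if P then 1 else 0) * (x::complex) = (if P then x else 0)"
  "x * (if P then 1 else 0) = (if P then x else 0)"
  "(if P then z else 0) * x = (if P then z * x else 0)"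
  "x * (if P then z else 0) = (if P then x * z else 0)"
  by simp_all

lemma sum_if_zero: "(\<Sum>b\<in>A. if P then g b else 0) = (if P then \<Sum>b\<in>A. g b else 0)"
  by simp

lemma ptraceE_kron_mult: "ptraceE (kron A (mat 1) ** Y) = A ** ptraceE Y"
proof -
  have "ptraceE (kron A (mat 1) ** Y) $ i $ j = (A ** ptraceE Y) $ i $ j" for i j
  proof -
    have "ptraceE (kron A (mat 1) ** Y) $ i $ j = (\<Sum>e\<in>UNIV. \<Sum>i'\<in>UNIV. A $ i $ i' * Y $ (i', e) $ (j, e))"
      by (simp add: ptraceE_def matrix_matrix_mult_def kron_def sum_UNIV_prod mat_def mult_if_zero
          sum_if_zero cong: if_cong)
    also have "\<dots> = (A ** ptraceE Y) $ i $ j"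
      by (simp add: ptraceE_def matrix_matrix_mult_def sum_distrib_left) (rule sum.swap)
    finally show ?thesis .
  qed
  thus ?thesis by (simp add: vec_eq_iff)
qed

lemma ptraceE_mult_kron: "ptraceE (Y ** kron C (mat 1)) = ptraceE Y ** C"
proof -
  have "ptraceE (Y ** kron C (mat 1)) $ i $ j = (ptraceE Y ** C) $ i $ j" for i j
  proof -
    have "ptraceE (Y ** kron C (mat 1)) $ i $ j = (\<Sum>e\<in>UNIV. \<Sum>j'\<in>UNIV. Y $ (i, e) $ (j', e) * C $ j' $ j)"
      by (simp add: ptraceE_def matrix_matrix_mult_def kron_def sum_UNIV_prod mat_def mult_if_zero
          sum_if_zero cong: if_cong)
    also have "\<dots> = (ptraceE Y ** C) $ i $ j"
      by (simp add: ptraceE_def matrix_matrix_mult_def sum_distrib_right) (rule sum.swap)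
    finally show ?thesis .
  qed
  thus ?thesis by (simp add: vec_eq_iff)
qed

lemma ptraceE_kron_commute: "ptraceE (kron (mat 1) B ** Y) = ptraceE (Y ** kron (mat 1) B)"
proof -
  have "ptraceE (kron (mat 1) B ** Y) $ i $ j = ptraceE (Y ** kron (mat 1) B) $ i $ j" for i j
  proof -
    have "ptraceE (kron (mat 1) B ** Y) $ i $ j = (\<Sum>e\<in>UNIV. \<Sum>f\<in>UNIV. B $ e $ f * Y $ (i, f) $ (j, e))"
      by (simp add: ptraceE_def matrix_matrix_mult_def kron_def sum_UNIV_prod mat_def mult_if_zero
          sum_if_zero cong: if_cong)
    also have "\<dots> = (\<Sum>f\<in>UNIV. \<Sum>e\<in>UNIV. Y $ (i, f) $ (j, e) * B $ e $ f)"
      by (subst sum.swap) (simp add: mult.commute)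
    also have "\<dots> = ptraceE (Y ** kron (mat 1) B) $ i $ j"
      by (simp add: ptraceE_def matrix_matrix_mult_def kron_def sum_UNIV_prod mat_def mult_if_zero
          sum_if_zero cong: if_cong)
    finally show ?thesis .
  qed
  thus ?thesis by (simp add: vec_eq_iff)
qed

lemma ptraceE_kron_conj:
  assumes "D ** B = mat 1"
  shows "ptraceE (kron A B ** Y ** kron C D) = A ** ptraceE Y ** C"
proof -
  have "kron A B = kron A (mat 1) ** kron (mat 1) B" "kron C D = kron (mat 1) D ** kron C (mat 1)"
    by (simp_all add: kron_mult)
  hence "kron A B ** Y ** kron C D
      = kron A (mat 1) ** ((kron (mat 1) B ** (Y ** kron (mat 1) D)) ** kron C (mat 1))"
    by (simp only: matrix_mul_assoc)
  hence "ptraceE (kron A B ** Y ** kron C D)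
      = ptraceE (kron A (mat 1) ** ((kron (mat 1) B ** (Y ** kron (mat 1) D)) ** kron C (mat 1)))"
    by simp
  also have "\<dots> = A ** ptraceE ((kron (mat 1) B ** (Y ** kron (mat 1) D)) ** kron C (mat 1))"
    by (rule ptraceE_kron_mult)
  also have "\<dots> = A ** ptraceE (kron (mat 1) B ** (Y ** kron (mat 1) D)) ** C"
    by (simp only: ptraceE_mult_kron matrix_mul_assoc)
  also have "ptraceE (kron (mat 1) B ** (Y ** kron (mat 1) D)) = ptraceE ((Y ** kron (mat 1) D) ** kron (mat 1) B)"
    by (rule ptraceE_kron_commute)
  also have "(Y ** kron (mat 1) D) ** kron (mat 1) B = Y"
    by (simp only: matrix_mul_assoc[symmetric] kron_mult assms) (simp add: kron_one)
  finally show ?thesis .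
qed

lemma ptraceE_kron: "ptraceE (kron A B) = msc (mtrace B) A"
  by (simp add: vec_eq_iff ptraceE_def kron_def mtrace_def msc_def sum_distrib_left mult.commute)

lemma bounded_linear_ptraceE_entry: "bounded_linear (\<lambda>X::('s::finite \<times> 'e::finite) op. ptraceE X $ i $ j)"
proof -
  have "linear (\<lambda>X::('s \<times> 'e) op. ptraceE X $ i $ j)"
    by (rule linearI) (simp_all add: ptraceE_def sum.distrib scaleR_sum_right)
  thus ?thesis using linear_conv_bounded_linear by blast
qed

subsection \<open>The interaction picture\<close>

definition free_ham :: "'s::finite op \<Rightarrow> 'e::finite op \<Rightarrow> ('s \<times> 'e) op" where
  "free_ham HS HE = kron HS (mat 1) + kron (mat 1) HE"

definition free_evol :: "'s::finite op \<Rightarrow> 'e::finite op \<Rightarrow> real \<Rightarrow> ('s \<times> 'e) op" where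
  "free_evol HS HE t = kron (evol HS t) (evol HE t)"

definition VEt :: "'e::finite op \<Rightarrow> 'e op \<Rightarrow> real \<Rightarrow> 'e op" where
  "VEt HE VE t = evol HE (- t) ** VE ** evol HE t"

definition int_ham :: "'s::finite op \<Rightarrow> 's op \<Rightarrow> 'e::finite op \<Rightarrow> 'e op \<Rightarrow> real \<Rightarrow> ('s \<times> 'e) op" where
  "int_ham HS VS HE VE t = kron (VSt HS VS t) (VEt HE VE t)"

definition int_comm :: "'s::finite op \<Rightarrow> 's op \<Rightarrow> 'e::finite op \<Rightarrow> 'e op \<Rightarrow> real
    \<Rightarrow> ('s \<times> 'e) op \<Rightarrow> ('s \<times> 'e) op" where
  "int_comm HS VS HE VE t X = int_ham HS VS HE VE t ** X - X ** int_ham HS VS HE VE t"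

definition int_state :: "'s::finite op \<Rightarrow> 's op \<Rightarrow> 'e::finite op \<Rightarrow> 'e op \<Rightarrow> ('s \<times> 'e) op
    \<Rightarrow> real \<Rightarrow> ('s \<times> 'e) op" where
  "int_state HS VS HE VE r t =
     (free_evol HS HE (- t) ** evol (HSE HS VS HE VE) t) ** r ** (evol (HSE HS VS HE VE) (- t) ** free_evol HS HE t)"

lemma free_evol_inverse: "free_evol HS HE (- t) ** free_evol HS HE t = mat 1"
  by (simp add: free_evol_def kron_mult evol_inverse kron_one)

lemma free_evol_inverse': "free_evol HS HE t ** free_evol HS HE (- t) = mat 1"
  by (simp add: free_evol_def kron_mult evol_inverse' kron_one)

lemma int_ham_free_evol:
  "int_ham HS VS HE VE t = free_evol HS HE (- t) ** kron VS VE ** free_evol HS HE t"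
  by (simp add: int_ham_def free_evol_def kron_mult VSt_def VEt_def)

lemma generator_HSE: "generator (HSE HS VS HE VE) = generator (free_ham HS HE) + generator (kron VS VE)"
  by (simp add: HSE_def free_ham_def msc_add algebra_simps)

lemma generator_mult_free_evol:
  "kron (evol HS t) (generator HE ** evol HE t) + kron (generator HS ** evol HS t) (evol HE t)
     = generator (free_ham HS HE) ** free_evol HS HE t"
  by (simp add: free_ham_def free_evol_def msc_add matrix_add_rdistrib kron_mult kron_msc_left
      kron_msc_right msc_matrix_mult_left)

lemma generator_commute_free_evol:
  "generator (free_ham HS HE) ** free_evol HS HE t = free_evol HS HE t ** generator (free_ham HS HE)"
proof -
  have "generator (free_ham HS HE) ** free_evol HS HE t
      = kron (evol HS t) (evol HE t ** generator HE) + kron (evol HS t ** generator HS) (evol HE t)"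
    by (simp flip: generator_mult_free_evol add: generator_commute_evol)
  also have "\<dots> = free_evol HS HE t ** generator (free_ham HS HE)"
    by (simp add: free_ham_def free_evol_def msc_add matrix_add_ldistrib kron_mult kron_msc_left
        kron_msc_right msc_matrix_mult_right)
  finally show ?thesis .
qed

lemma free_evol_has_vector_derivative:
  "((\<lambda>t. free_evol HS HE t) has_vector_derivative generator (free_ham HS HE) ** free_evol HS HE t) (at t within S)"
  using bounded_bilinear.has_vector_derivative[OF kron_bounded_bilinear
      evol_has_vector_derivative[of HS] evol_has_vector_derivative[of HE]]
  by (simp add: free_evol_def[abs_def] generator_mult_free_evol)

lemma free_evol_neg_has_vector_derivative:
  "((\<lambda>t. free_evol HS HE (- t)) has_vector_derivative - (free_evol HS HE (- t) ** generator (free_ham HS HE)))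
     (at t within S)"
proof -
  have "((\<lambda>t. - t) has_vector_derivative (-1)) (at t within S)"
    by (auto intro!: derivative_eq_intros simp: has_real_derivative_iff_has_vector_derivative[symmetric])
  from vector_diff_chain_within[OF this free_evol_has_vector_derivative] show ?thesis
    by (simp add: o_def generator_commute_free_evol)
qed

text \<open>Differentiating the product, the free parts of the generator cancel and only the
  interaction survives.\<close>

lemma int_state_has_vector_derivative:
  "((\<lambda>t. int_state HS VS HE VE r t) has_vector_derivative
     msc (- \<i>) (int_comm HS VS HE VE t (int_state HS VS HE VE r t))) (at t within S)"
proof -
  note bb = matrix_mult_bounded_bilinear
  let ?a = "free_evol HS HE (- t)" and ?b = "free_evol HS HE t"
    and ?u = "evol (HSE HS VS HE VE) t" and ?w = "evol (HSE HS VS HE VE) (- t)"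
    and ?F = "generator (free_ham HS HE)" and ?V = "generator (kron VS VE)"
    and ?G = "generator (HSE HS VS HE VE)"
  have D1: "((\<lambda>t. free_evol HS HE (- t) ** evol (HSE HS VS HE VE) t) has_vector_derivative
      ?a ** (?V ** ?u)) (at t within S)"
  proof -
    have "((\<lambda>t. free_evol HS HE (- t) ** evol (HSE HS VS HE VE) t) has_vector_derivative
        ?a ** (?G ** ?u) + (- (?a ** ?F)) ** ?u) (at t within S)"
      by (rule bounded_bilinear.has_vector_derivative[OF bb free_evol_neg_has_vector_derivative
          evol_has_vector_derivative])
    moreover have "?a ** (?G ** ?u) + (- (?a ** ?F)) ** ?u = ?a ** (?V ** ?u)"
      by (simp add: generator_HSE matrix_add_rdistrib matrix_add_ldistrib matrix_mul_assoc
          bounded_bilinear.minus_left[OF bb])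
    ultimately show ?thesis by simp
  qed
  have D2: "((\<lambda>t. evol (HSE HS VS HE VE) (- t) ** free_evol HS HE t) has_vector_derivative
      - (?w ** (?V ** ?b))) (at t within S)"
  proof -
    have "((\<lambda>t. evol (HSE HS VS HE VE) (- t) ** free_evol HS HE t) has_vector_derivative
        ?w ** (?F ** ?b) + (- (?w ** ?G)) ** ?b) (at t within S)"
      by (rule bounded_bilinear.has_vector_derivative[OF bb evol_neg_has_vector_derivative
          free_evol_has_vector_derivative])
    moreover have "?w ** (?F ** ?b) + (- (?w ** ?G)) ** ?b = - (?w ** (?V ** ?b))"
      by (simp add: generator_HSE matrix_add_rdistrib matrix_add_ldistrib matrix_mul_assoc
          bounded_bilinear.minus_left[OF bb] bounded_bilinear.minus_right[OF bb] matrix_diff_rdistrib)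
    ultimately show ?thesis by simp
  qed
  have D3: "((\<lambda>t. (free_evol HS HE (- t) ** evol (HSE HS VS HE VE) t) ** r) has_vector_derivative
      (?a ** (?V ** ?u)) ** r) (at t within S)"
    using bounded_bilinear.has_vector_derivative[OF bb D1 has_vector_derivative_const[of r]]
    by (simp add: bounded_bilinear.zero_right[OF bb])
  have "((?a ** ?u) ** r) ** (- (?w ** (?V ** ?b))) + ((?a ** (?V ** ?u)) ** r) ** (?w ** ?b)
      = msc (- \<i>) (int_comm HS VS HE VE t (int_state HS VS HE VE r t))"
    by (simp add: int_comm_def int_ham_free_evol int_state_def matrix_mul_assoc
        bounded_bilinear.minus_right[OF bb] msc_matrix_mult_left msc_matrix_mult_right msc_diff
        free_evol_inverse' flip: matrix_mul_assoc[of _ "free_evol HS HE t"])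
  with bounded_bilinear.has_vector_derivative[OF bb D3 D2] show ?thesis
    by (simp add: int_state_def)
qed

lemma int_state_zero: "int_state HS VS HE VE r 0 = r"
  by (simp add: int_state_def free_evol_def evol_zero kron_one)

lemma continuous_on_int_ham: "continuous_on S (\<lambda>t. int_ham HS VS HE VE t)"
proof -
  have "continuous_on S (\<lambda>t. free_evol HS HE t)"
    by (intro continuous_at_imp_continuous_on ballI
        has_vector_derivative_continuous[OF free_evol_has_vector_derivative])
  moreover have "continuous_on S (\<lambda>t. free_evol HS HE (- t))"
    by (intro continuous_at_imp_continuous_on ballI
        has_vector_derivative_continuous[OF free_evol_neg_has_vector_derivative])
  ultimately show ?thesis unfolding int_ham_free_evol
    by (intro bounded_bilinear.continuous_on[OF matrix_mult_bounded_bilinear] continuous_on_const)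
qed

lemma continuous_on_int_state: "continuous_on S (\<lambda>t. int_state HS VS HE VE r t)"
  by (intro continuous_at_imp_continuous_on ballI has_vector_derivative_continuous[OF
      int_state_has_vector_derivative])

lemma continuous_on_int_comm:
  "continuous_on S X \<Longrightarrow> continuous_on S (\<lambda>s. int_comm HS VS HE VE s (X s))"
  unfolding int_comm_def
  by (intro continuous_on_diff bounded_bilinear.continuous_on[OF matrix_mult_bounded_bilinear]
      continuous_on_int_ham)

lemma int_state_integral_eq:
  assumes "0 \<le> t"
  shows "int_state HS VS HE VE r t
    = r + msc (- \<i>) (integral {0..t} (\<lambda>s. int_comm HS VS HE VE s (int_state HS VS HE VE r s)))"
proof -
  have "((\<lambda>s. msc (- \<i>) (int_comm HS VS HE VE s (int_state HS VS HE VE r s))) has_integral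
      (int_state HS VS HE VE r t - r)) {0..t}"
    using fundamental_theorem_of_calculus[OF assms int_state_has_vector_derivative]
    by (simp add: int_state_zero)
  hence "integral {0..t} (\<lambda>s. msc (- \<i>) (int_comm HS VS HE VE s (int_state HS VS HE VE r s)))
      = int_state HS VS HE VE r t - r"
    by (rule integral_unique)
  moreover have "(\<lambda>s. int_comm HS VS HE VE s (int_state HS VS HE VE r s)) integrable_on {0..t}"
    by (intro integrable_continuous_interval continuous_on_int_comm continuous_on_int_state)
  from integral_linear[OF this bounded_linear_msc]
  have "integral {0..t} (\<lambda>s. msc (- \<i>) (int_comm HS VS HE VE s (int_state HS VS HE VE r s)))
      = msc (- \<i>) (integral {0..t} (\<lambda>s. int_comm HS VS HE VE s (int_state HS VS HE VE r s)))"
    by (simp only: o_def)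
  ultimately show ?thesis by (simp add: algebra_simps)
qed

lemma rhoSI_eq_ptraceE_int_state:
  "rhoSI HS VS HE VE rhoS rhoE t = ptraceE (int_state HS VS HE VE (kron rhoS rhoE) t)"
proof -
  have "int_state HS VS HE VE (kron rhoS rhoE) t = kron (evol HS (- t)) (evol HE (- t)) **
      (evol (HSE HS VS HE VE) t ** kron rhoS rhoE ** evol (HSE HS VS HE VE) (- t)) ** kron (evol HS t) (evol HE t)"
    by (simp add: int_state_def free_evol_def matrix_mul_assoc)
  thus ?thesis by (simp add: rhoSI_def ptraceE_kron_conj evol_inverse')
qed

subsection \<open>The Dyson series of a linear Volterra equation\<close>

primrec volterra_iter :: "(real \<Rightarrow> 'n::finite op \<Rightarrow> 'n op) \<Rightarrow> (real \<Rightarrow> 'n op) \<Rightarrow> nat \<Rightarrow> real \<Rightarrow> 'n op" where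
  "volterra_iter L P 0 t = P t"
| "volterra_iter L P (Suc k) t = integral {0..t} (\<lambda>s. L s (volterra_iter L P k s))"

lemma continuous_on_integral_from_0:
  fixes f :: "real \<Rightarrow> 'a::banach"
  assumes "continuous_on {0..T} f"
  shows "continuous_on {0..T} (\<lambda>t. integral {0..t} f)"
  using indefinite_integral_continuous_1[OF integrable_continuous_interval[OF assms]] .

lemma integrable_on_initial_segment:
  fixes f :: "real \<Rightarrow> 'a::banach"
  assumes "continuous_on {0..T} f" "t \<in> {0..T}"
  shows "f integrable_on {0..t}"
  using assms by (intro integrable_continuous_interval) (auto elim: continuous_on_subset)

lemma monomial_has_integral:
  assumes "0 \<le> t"
  shows "((\<lambda>s::real. c * s^k) has_integral c * t^(Suc k) / Suc k) {0..t}"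
proof -
  have "((\<lambda>s. c / Suc k * s^Suc k) has_vector_derivative c * x^k) (at x within {0..t})" for x
  proof -
    have "((\<lambda>s. c / Suc k * s^Suc k) has_real_derivative c / Suc k * (real (Suc k) * x^k)) (at x within {0..t})"
      using DERIV_cmult[OF DERIV_pow[of "Suc k" x "{0..t}"], of "c / Suc k"] by simp
    moreover have "c / Suc k * (real (Suc k) * x^k) = c * x^k"
      by (simp del: of_nat_Suc)
    ultimately show ?thesis
      by (simp add: has_real_derivative_iff_has_vector_derivative)
  qed
  from fundamental_theorem_of_calculus[OF assms this] show ?thesis
    by (simp add: field_simps)
qed

locale volterra_kernel =
  fixes L :: "real \<Rightarrow> 'n::finite op \<Rightarrow> 'n op" and T :: real
  assumes kernel_add: "\<And>s X Y. L s (X + Y) = L s X + L s Y"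
    and kernel_msc: "\<And>s c X. L s (msc c X) = msc c (L s X)"
    and kernel_continuous_on:
      "\<And>X. continuous_on {0..T} X \<Longrightarrow> continuous_on {0..T} (\<lambda>s. L s (X s))"
begin

lemma bounded_linear_kernel: "bounded_linear (L s)"
proof -
  have "linear (L s)"
    by (rule linearI) (simp_all add: kernel_add scaleR_eq_msc kernel_msc)
  thus ?thesis using linear_conv_bounded_linear by blast
qed

lemma continuous_on_volterra_iter:
  "continuous_on {0..T} P \<Longrightarrow> continuous_on {0..T} (volterra_iter L P k)"
  by (induction k) (auto intro!: continuous_on_integral_from_0 kernel_continuous_on)

lemma integrable_kernel_volterra_iter:
  "continuous_on {0..T} P \<Longrightarrow> t \<in> {0..T} \<Longrightarrow> (\<lambda>s. L s (volterra_iter L P k s)) integrable_on {0..t}"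
  by (intro integrable_on_initial_segment[where T=T] kernel_continuous_on continuous_on_volterra_iter)

lemma norm_volterra_iter_le:
  assumes "continuous_on {0..T} P" and "\<And>s. s \<in> {0..T} \<Longrightarrow> norm (P s) \<le> B"
    and "0 \<le> C" and "\<And>s X. s \<in> {0..T} \<Longrightarrow> norm (L s X) \<le> C * norm X"
    and "s \<in> {0..T}"
  shows "norm (volterra_iter L P k s) \<le> B * C^k * s^k / fact k"
  using assms(5)
proof (induction k arbitrary: s)
  case 0
  thus ?case using assms(2) by simp
next
  case (Suc k)
  have "norm (volterra_iter L P (Suc k) s) \<le> integral {0..s} (\<lambda>x. (C * (B * C^k / fact k)) * x^k)"
  proof (unfold volterra_iter.simps, rule integral_norm_bound_integral)
    show "(\<lambda>x. L x (volterra_iter L P k x)) integrable_on {0..s}"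
      by (rule integrable_kernel_volterra_iter[OF assms(1) Suc.prems])
    show "(\<lambda>x. (C * (B * C^k / fact k)) * x^k) integrable_on {0..s}"
      using monomial_has_integral[of s] Suc.prems by auto
    fix x assume "x \<in> {0..s}"
    hence x: "x \<in> {0..T}" using Suc.prems by auto
    have "norm (L x (volterra_iter L P k x)) \<le> C * norm (volterra_iter L P k x)"
      by (rule assms(4)[OF x])
    also have "\<dots> \<le> C * (B * C^k * x^k / fact k)"
      by (intro mult_left_mono Suc.IH x assms(3))
    finally show "norm (L x (volterra_iter L P k x)) \<le> (C * (B * C^k / fact k)) * x^k"
      by simp
  qed
  also have "\<dots> = (C * (B * C^k / fact k)) * s^Suc k / Suc k"
    using Suc.prems by (intro integral_unique monomial_has_integral) auto
  also have "\<dots> = B * C^Suc k * s^Suc k / fact (Suc k)"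
    by (simp add: fact_Suc field_simps del: of_nat_Suc)
  finally show ?case .
qed

lemma iterint_foldr_kernel:
  assumes "bounded_linear \<psi>" and "s \<in> {0..T}"
  shows "iterint n s (\<lambda>ts. \<psi> (foldr L ts X)) = (\<psi> (volterra_iter L (\<lambda>_. X) n s) :: complex)"
  using assms
proof (induction n arbitrary: \<psi> s)
  case 0
  thus ?case by simp
next
  case (Suc n)
  have "iterint (Suc n) s (\<lambda>ts. \<psi> (foldr L ts X))
      = integral {0..s} (\<lambda>u. iterint n u (\<lambda>ts. \<psi> (L u (foldr L ts X))))"
    by simp
  also have "\<dots> = integral {0..s} (\<lambda>u. \<psi> (L u (volterra_iter L (\<lambda>_. X) n u)))"
  proof (rule integral_cong)
    fix u assume "u \<in> {0..s}"
    hence "u \<in> {0..T}" using Suc.prems by auto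
    with Suc.IH[OF bounded_linear_compose[OF Suc.prems(1) bounded_linear_kernel]]
    show "iterint n u (\<lambda>ts. \<psi> (L u (foldr L ts X))) = \<psi> (L u (volterra_iter L (\<lambda>_. X) n u))"
      by simp
  qed
  also have "\<dots> = \<psi> (integral {0..s} (\<lambda>u. L u (volterra_iter L (\<lambda>_. X) n u)))"
    using integral_linear[OF integrable_kernel_volterra_iter[OF continuous_on_const Suc.prems(2)]
        Suc.prems(1)]
    by (simp only: o_def)
  finally show ?case by simp
qed

end

locale volterra_equation = volterra_kernel +
  fixes P :: "real \<Rightarrow> 'n::finite op"
  assumes kernel_bounded: "\<exists>C\<ge>0. \<forall>s\<in>{0..T}. \<forall>X. norm (L s X) \<le> C * norm X"
    and continuous_on_solution: "continuous_on {0..T} P"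
    and solution_integral_eq: "\<And>t. t \<in> {0..T} \<Longrightarrow> P t = P 0 + msc (- \<i>) (integral {0..t} (\<lambda>s. L s (P s)))"
begin

lemma volterra_iter_solution:
  "t \<in> {0..T} \<Longrightarrow>
     volterra_iter L P k t = volterra_iter L (\<lambda>_. P 0) k t + msc (- \<i>) (volterra_iter L P (Suc k) t)"
proof (induction k arbitrary: t)
  case 0
  show ?case using solution_integral_eq[OF 0] by simp
next
  case (Suc k)
  let ?A = "\<lambda>s. L s (volterra_iter L (\<lambda>_. P 0) k s)"
    and ?R = "\<lambda>s. L s (volterra_iter L P (Suc k) s)"
  have "volterra_iter L P (Suc k) t = integral {0..t} (\<lambda>s. ?A s + msc (- \<i>) (?R s))"
    using Suc by (auto intro!: integral_cong simp: kernel_add kernel_msc)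
  also have "\<dots> = integral {0..t} ?A + integral {0..t} (\<lambda>s. msc (- \<i>) (?R s))"
    by (intro integral_add integrable_kernel_volterra_iter continuous_on_const Suc.prems
        integrable_linear[OF _ bounded_linear_msc, unfolded o_def] continuous_on_solution)
  also have "integral {0..t} (\<lambda>s. msc (- \<i>) (?R s)) = msc (- \<i>) (integral {0..t} ?R)"
    using integral_linear[OF integrable_kernel_volterra_iter[OF continuous_on_solution Suc.prems]
        bounded_linear_msc]
    by (simp only: o_def)
  finally show ?case by simp
qed

lemma dyson_partial_sum:
  assumes "bounded_linear \<psi>" and "\<And>c X. \<psi> (msc c X) = c * \<psi> X" and "t \<in> {0..T}"
  shows "\<psi> (P t) = (\<Sum>k<N. (- \<i>)^k * \<psi> (volterra_iter L (\<lambda>_. P 0) k t))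
                   + (- \<i>)^N * \<psi> (volterra_iter L P N t)"
proof (induction N)
  case 0
  show ?case by simp
next
  case (Suc N)
  show ?case
    unfolding Suc volterra_iter_solution[OF assms(3), of N]
    using assms(1,2) by (simp add: linear_simps algebra_simps)
qed

lemma dyson_remainder_tendsto_zero:
  assumes "bounded_linear \<psi>" and t: "t \<in> {0..T}"
  shows "(\<lambda>N. (- \<i>)^N * \<psi> (volterra_iter L P N t)) \<longlonglongrightarrow> (0 :: complex)"
proof -
  obtain C where C: "0 \<le> C" "\<And>s X. s \<in> {0..T} \<Longrightarrow> norm (L s X) \<le> C * norm X"
    using kernel_bounded by blast
  have "bounded (P ` {0..T})"
    by (intro compact_imp_bounded compact_continuous_image continuous_on_solution compact_Icc)
  then obtain B where "\<forall>x\<in>P ` {0..T}. norm x \<le> B"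
    unfolding bounded_iff by blast
  hence B: "\<And>s. s \<in> {0..T} \<Longrightarrow> norm (P s) \<le> B"
    by blast
  obtain K where K: "\<And>X. norm (\<psi> X) \<le> norm X * K" "0 < K"
    using bounded_linear.pos_bounded[OF assms(1)] by blast
  have "norm ((- \<i>)^N * \<psi> (volterra_iter L P N t)) \<le> B * K * ((C * t)^N / fact N)" for N
  proof -
    have "norm ((- \<i>)^N * \<psi> (volterra_iter L P N t)) = norm (\<psi> (volterra_iter L P N t))"
      by (simp add: norm_mult norm_power)
    also have "\<dots> \<le> norm (volterra_iter L P N t) * K"
      by (rule K(1))
    also have "\<dots> \<le> (B * C^N * t^N / fact N) * K"
      by (intro mult_right_mono norm_volterra_iter_le[OF continuous_on_solution B C t]
          less_imp_le[OF K(2)])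
    finally show ?thesis by (simp add: power_mult_distrib mult_ac)
  qed
  moreover have "(\<lambda>N. B * K * ((C * t)^N / fact N)) \<longlonglongrightarrow> 0"
  proof -
    have "(\<lambda>N. (C * t)^N / fact N) \<longlonglongrightarrow> 0"
      using summable_LIMSEQ_zero[OF summable_exp[of "C * t"]] by (simp add: divide_inverse mult.commute)
    from tendsto_mult[OF tendsto_const this, of "B * K"] show ?thesis by simp
  qed
  ultimately show ?thesis
    by (rule Lim_null_comparison[OF always_eventually[OF allI]])
qed

theorem dyson_series_sums:
  assumes "bounded_linear \<psi>" and "\<And>c X. \<psi> (msc c X) = c * \<psi> X" and "t \<in> {0..T}"
  shows "(\<lambda>k. (- \<i>)^k * \<psi> (volterra_iter L (\<lambda>_. P 0) k t)) sums \<psi> (P t)"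
proof -
  have "(\<lambda>N. \<psi> (P t) - (- \<i>)^N * \<psi> (volterra_iter L P N t)) \<longlonglongrightarrow> \<psi> (P t) - 0"
    by (intro tendsto_diff tendsto_const dyson_remainder_tendsto_zero assms(1,3))
  moreover have "(\<lambda>N. \<psi> (P t) - (- \<i>)^N * \<psi> (volterra_iter L P N t))
      = (\<lambda>N. \<Sum>k<N. (- \<i>)^k * \<psi> (volterra_iter L (\<lambda>_. P 0) k t))"
    using dyson_partial_sum[OF assms] by (auto simp: algebra_simps)
  ultimately show ?thesis
    unfolding sums_def by simp
qed

end

subsection \<open>Matrix elements with respect to the environment\<close>

definition cinner :: "complex^'e::finite \<Rightarrow> complex^'e \<Rightarrow> complex" where
  "cinner x y = (\<Sum>e\<in>UNIV. cnj (x$e) * y$e)"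

lemma braket_eq_cinner: "braket x A y = cinner x (A *v y)"
  by (simp add: braket_def cinner_def matrix_vector_mult_def sum_distrib_left mult.assoc)

lemma cnj_cinner: "cnj (cinner x y) = cinner y x"
  by (simp add: cinner_def mult.commute)

lemma cinner_matrix_vector_mult: "cinner (A *v x) y = cinner x (madj A *v y)"
proof -
  have "cinner (A *v x) y = (\<Sum>e\<in>UNIV. \<Sum>f\<in>UNIV. cnj (A$e$f) * cnj (x$f) * y$e)"
    by (simp add: cinner_def matrix_vector_mult_def sum_distrib_right)
  also have "\<dots> = (\<Sum>f\<in>UNIV. \<Sum>e\<in>UNIV. cnj (A$e$f) * cnj (x$f) * y$e)"
    by (rule sum.swap)
  also have "\<dots> = cinner x (madj A *v y)"
    by (simp add: cinner_def matrix_vector_mult_def madj_def sum_distrib_left algebra_simps)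
  finally show ?thesis .
qed

text \<open>An orthonormal family indexed by the basis type is a square unitary matrix, whose
  rows are then orthonormal as well.\<close>

lemma orthonormal_family_complete:
  fixes f :: "'e::finite \<Rightarrow> complex^'e"
  assumes "orthonormal_family f"
  shows "(\<Sum>n\<in>UNIV. f n $ e * cnj (f n $ e')) = (if e = e' then 1 else 0)"
proof -
  define F :: "complex^'e^'e" where "F = (\<chi> e n. f n $ e)"
  have "madj F ** F = mat 1"
    using assms by (simp add: vec_eq_iff madj_def F_def matrix_matrix_mult_def orthonormal_family_def mat_def)
  hence "F ** madj F = mat 1"
    using matrix_left_right_inverse by blast
  hence "(F ** madj F) $ e $ e' = mat 1 $ e $ e'"
    by simp
  thus ?thesis by (simp add: madj_def F_def matrix_matrix_mult_def mat_def)
qed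

lemma orthonormal_family_expansion:
  fixes f :: "'e::finite \<Rightarrow> complex^'e"
  assumes "orthonormal_family f"
  shows "w = (\<Sum>n\<in>UNIV. cinner (f n) w *s f n)"
proof -
  have "(\<Sum>n\<in>UNIV. cinner (f n) w *s f n) $ e' = w $ e'" for e'
  proof -
    have "(\<Sum>n\<in>UNIV. cinner (f n) w *s f n) $ e' = (\<Sum>n\<in>UNIV. \<Sum>e\<in>UNIV. cnj (f n $ e) * w $ e * f n $ e')"
      by (simp add: sum_component cinner_def sum_distrib_right)
    also have "\<dots> = (\<Sum>e\<in>UNIV. w $ e * (\<Sum>n\<in>UNIV. f n $ e' * cnj (f n $ e)))"
      by (subst sum.swap) (simp add: sum_distrib_left algebra_simps)
    also have "\<dots> = w $ e'"
      by (simp add: orthonormal_family_complete[OF assms] mult_if_zero sum_if_zero cong: if_cong)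
    finally show ?thesis .
  qed
  thus ?thesis by (simp add: vec_eq_iff)
qed

text \<open>The eigenbasis of V_E(u) = exp(iuH_E) V_E exp(-iuH_E).\<close>

definition moving_basis :: "'e::finite op \<Rightarrow> ('e \<Rightarrow> complex^'e) \<Rightarrow> real \<Rightarrow> 'e \<Rightarrow> complex^'e" where
  "moving_basis HE b u n = evol HE (- u) *v b n"

lemma cinner_moving_basis:
  assumes "hermitian HE"
  shows "cinner (moving_basis HE b u n) (moving_basis HE b s m) = braket (b n) (evol HE (u - s)) (b m)"
proof -
  have "cinner (moving_basis HE b u n) (moving_basis HE b s m) = cinner (b n) ((evol HE u ** evol HE (- s)) *v b m)"
    by (simp add: moving_basis_def cinner_matrix_vector_mult madj_evol[OF assms] matrix_vector_mul_assoc)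
  thus ?thesis
    using evol_add[of HE u "- s"] by (simp add: braket_eq_cinner)
qed

lemma orthonormal_family_moving_basis:
  assumes "hermitian HE" "orthonormal_family b"
  shows "orthonormal_family (moving_basis HE b u)"
proof -
  have "cinner (moving_basis HE b u n) (moving_basis HE b u m) = cinner (b n) (b m)" for n m
    by (simp add: cinner_moving_basis[OF assms(1)] evol_zero braket_eq_cinner)
  with assms(2) show ?thesis
    by (simp add: orthonormal_family_def cinner_def)
qed

lemma VE_eigenvector:
  fixes b :: "'e::finite \<Rightarrow> complex^'e"
  assumes "orthonormal_family b" "VE = (\<Sum>n\<in>UNIV. msc (of_real (v n)) (ketbra (b n) (b n)))"
  shows "VE *v b n = of_real (v n) *s b n"
proof -
  have "(VE *v b n) $ e = (of_real (v n) *s b n) $ e" for e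
  proof -
    have "(VE *v b n) $ e = (\<Sum>f\<in>UNIV. \<Sum>m\<in>UNIV. of_real (v m) * b m $ e * (cnj (b m $ f) * b n $ f))"
      by (simp add: assms(2) matrix_vector_mult_def msc_def ketbra_def sum_component
          sum_distrib_right sum_distrib_left algebra_simps)
    also have "\<dots> = (\<Sum>m\<in>UNIV. of_real (v m) * b m $ e * (\<Sum>f\<in>UNIV. cnj (b m $ f) * b n $ f))"
      by (subst sum.swap) (simp add: sum_distrib_left algebra_simps)
    also have "\<dots> = (\<Sum>m\<in>UNIV. of_real (v m) * b m $ e * (if m = n then 1 else 0))"
      using assms(1) by (simp add: orthonormal_family_def)
    also have "\<dots> = (\<Sum>m\<in>UNIV. if m = n then of_real (v m) * b m $ e else 0)"
      by (rule sum.cong) auto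
    also have "\<dots> = (of_real (v n) *s b n) $ e"
      by simp
    finally show ?thesis .
  qed
  thus ?thesis by (simp add: vec_eq_iff)
qed

lemma VEt_moving_basis:
  assumes "orthonormal_family b" "VE = (\<Sum>n\<in>UNIV. msc (of_real (v n)) (ketbra (b n) (b n)))"
  shows "VEt HE VE t *v moving_basis HE b t n = of_real (v n) *s moving_basis HE b t n"
proof -
  have "VEt HE VE t *v moving_basis HE b t n = evol HE (- t) *v (VE *v ((evol HE t ** evol HE (- t)) *v b n))"
    by (simp add: VEt_def moving_basis_def matrix_vector_mul_assoc matrix_mul_assoc)
  thus ?thesis
    by (simp add: evol_inverse' VE_eigenvector[OF assms] vector_scalar_commute moving_basis_def)
qed

lemma madj_VEt:
  assumes "hermitian HE" "hermitian VE"
  shows "madj (VEt HE VE t) = VEt HE VE t"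
  using assms by (simp add: VEt_def madj_matrix_mult madj_evol hermitian_def matrix_mul_assoc)

definition env_elem :: "('s::finite \<times> 'e::finite) op \<Rightarrow> complex^'e \<Rightarrow> complex^'e \<Rightarrow> 's op" where
  "env_elem X x y = (\<chi> i j. \<Sum>e\<in>UNIV. \<Sum>e'\<in>UNIV. cnj (x$e) * X$(i,e)$(j,e') * y$e')"

lemma env_elem_diff: "env_elem (X - Y) x y = env_elem X x y - env_elem Y x y"
  by (simp add: env_elem_def vec_eq_iff algebra_simps sum_subtractf)

lemma env_elem_smult_left: "env_elem X (c *s x) y = msc (cnj c) (env_elem X x y)"
  by (simp add: env_elem_def vec_eq_iff msc_def sum_distrib_left algebra_simps)

lemma env_elem_smult_right: "env_elem X x (c *s y) = msc c (env_elem X x y)"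
  by (simp add: env_elem_def vec_eq_iff msc_def sum_distrib_left algebra_simps)

lemma env_elem_sum_left: "finite A \<Longrightarrow> env_elem X (\<Sum>n\<in>A. f n) y = (\<Sum>n\<in>A. env_elem X (f n) y)"
  by (induction A rule: finite_induct)
    (simp_all add: env_elem_def vec_eq_iff algebra_simps sum.distrib)

lemma env_elem_sum_right: "finite A \<Longrightarrow> env_elem X x (\<Sum>n\<in>A. f n) = (\<Sum>n\<in>A. env_elem X x (f n))"
  by (induction A rule: finite_induct)
    (simp_all add: env_elem_def vec_eq_iff algebra_simps sum.distrib)

text \<open>Writing the matrix element as a product with the partial isometries
  |i> \<mapsto> |i> \<otimes> |y> and their adjoints reduces its algebra to matrix multiplication.\<close>

definition env_bra :: "complex^'e::finite \<Rightarrow> complex^('s::finite \<times> 'e)^'s" where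
  "env_bra x = (\<chi> i p. if fst p = i then cnj (x $ snd p) else 0)"

definition env_ket :: "complex^'e::finite \<Rightarrow> complex^'s::finite^('s \<times> 'e)" where
  "env_ket y = (\<chi> p j. if fst p = j then y $ snd p else 0)"

lemma env_elem_eq_bra_ket: "env_elem X x y = env_bra x ** X ** env_ket y"
proof -
  have "env_elem X x y $ i $ j = (env_bra x ** X ** env_ket y) $ i $ j" for i j
  proof -
    have "(env_bra x ** X ** env_ket y) $ i $ j = (\<Sum>e'\<in>UNIV. (\<Sum>e\<in>UNIV. cnj (x$e) * X$(i,e)$(j,e')) * y$e')"
      by (simp add: env_bra_def env_ket_def matrix_matrix_mult_def sum_UNIV_prod mult_if_zero
          sum_if_zero cong: if_cong)
    also have "\<dots> = env_elem X x y $ i $ j"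
      by (simp add: env_elem_def sum_distrib_right) (rule sum.swap)
    finally show ?thesis by simp
  qed
  thus ?thesis by (simp add: vec_eq_iff)
qed

lemma env_bra_kron: "env_bra x ** kron A B = A ** env_bra (madj B *v x)"
  by (simp add: vec_eq_iff env_bra_def kron_def matrix_matrix_mult_def sum_UNIV_prod mult_if_zero
      sum_if_zero matrix_vector_mult_def madj_def sum_distrib_left algebra_simps cong: if_cong)

lemma kron_env_ket: "kron A B ** env_ket y = env_ket (B *v y) ** A"
  by (simp add: vec_eq_iff env_ket_def kron_def matrix_matrix_mult_def sum_UNIV_prod mult_if_zero
      sum_if_zero matrix_vector_mult_def sum_distrib_left sum_distrib_right algebra_simps
      cong: if_cong)

lemma env_bra_env_ket: "(env_bra x :: complex^('s::finite \<times> 'e::finite)^'s) ** env_ket y = msc (cinner x y) (mat 1)"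
  by (simp add: vec_eq_iff env_bra_def env_ket_def matrix_matrix_mult_def sum_UNIV_prod mult_if_zero
      sum_if_zero msc_def mat_def cinner_def cong: if_cong)

lemma env_elem_kron_mult: "env_elem (kron A B ** X) x y = A ** env_elem X (madj B *v x) y"
  by (simp add: env_elem_eq_bra_ket matrix_mul_assoc env_bra_kron)

lemma env_elem_mult_kron: "env_elem (X ** kron A B) x y = env_elem X x (B *v y) ** A"
  by (simp add: env_elem_eq_bra_ket matrix_mul_assoc[symmetric] kron_env_ket)

lemma env_elem_kron: "env_elem (kron A B) x y = msc (cinner x (B *v y)) A"
proof -
  have "env_elem (kron A B) x y = A ** (env_bra (madj B *v x) ** env_ket y)"
    by (simp add: env_elem_eq_bra_ket env_bra_kron matrix_mul_assoc)
  thus ?thesis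
    by (simp add: env_bra_env_ket cinner_matrix_vector_mult madj_madj msc_matrix_mult_right)
qed

lemma WS_eq: "WS HS VS x y t A = msc (of_real x) (VSt HS VS t ** A) - msc (of_real y) (A ** VSt HS VS t)"
  by (simp add: WS_def vec_eq_iff msc_def field_simps)

lemma env_elem_int_comm:
  assumes "hermitian HE" "hermitian VE" "orthonormal_family b"
    "VE = (\<Sum>n\<in>UNIV. msc (of_real (v n)) (ketbra (b n) (b n)))"
  shows "env_elem (int_comm HS VS HE VE t X) (moving_basis HE b t n) (moving_basis HE b t m)
    = WS HS VS (v n) (v m) t (env_elem X (moving_basis HE b t n) (moving_basis HE b t m))"
  by (simp add: int_comm_def int_ham_def env_elem_diff env_elem_kron_mult env_elem_mult_kron
      madj_VEt[OF assms(1,2)] VEt_moving_basis[OF assms(3,4)] env_elem_smult_left env_elem_smult_right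
      WS_eq msc_matrix_mult_left msc_matrix_mult_right)

lemma env_elem_change_basis:
  assumes "hermitian HE" "orthonormal_family b"
  shows "env_elem X (moving_basis HE b u n) (moving_basis HE b u m) =
    (\<Sum>n'\<in>UNIV. \<Sum>m'\<in>UNIV. msc (Tprop HE b (u - s) n m n' m')
        (env_elem X (moving_basis HE b s n') (moving_basis HE b s m')))"
proof -
  let ?c = "\<lambda>n n'. cinner (moving_basis HE b s n') (moving_basis HE b u n)"
  have on: "orthonormal_family (moving_basis HE b s)"
    by (rule orthonormal_family_moving_basis[OF assms])
  have "env_elem X (moving_basis HE b u n) (moving_basis HE b u m)
      = env_elem X (\<Sum>n'\<in>UNIV. ?c n n' *s moving_basis HE b s n') (\<Sum>m'\<in>UNIV. ?c m m' *s moving_basis HE b s m')"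
    by (subst (1 2) orthonormal_family_expansion[OF on]) (rule refl)
  also have "\<dots> = (\<Sum>n'\<in>UNIV. \<Sum>m'\<in>UNIV. msc (cnj (?c n n') * ?c m m')
      (env_elem X (moving_basis HE b s n') (moving_basis HE b s m')))"
    by (subst env_elem_sum_left, simp)
      (simp add: env_elem_sum_right env_elem_smult_left env_elem_smult_right msc_sum msc_msc)
  also have "\<dots> = (\<Sum>n'\<in>UNIV. \<Sum>m'\<in>UNIV. msc (Tprop HE b (u - s) n m n' m')
      (env_elem X (moving_basis HE b s n') (moving_basis HE b s m')))"
  proof -
    have "cnj (cinner (moving_basis HE b s k') (moving_basis HE b u k)) = braket (b k) (evol HE (u - s)) (b k')"
      for k k'
      by (subst cnj_cinner) (rule cinner_moving_basis[OF assms(1)])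
    hence "cnj (?c n n') * ?c m m' = Tprop HE b (u - s) n m n' m'" for n' m'
      by (metis Tprop_def complex_cnj_cnj)
    thus ?thesis by simp
  qed
  finally show ?thesis .
qed

lemma ptraceE_eq_sum_env_elem:
  assumes "hermitian HE" "orthonormal_family b"
  shows "ptraceE X = (\<Sum>n\<in>UNIV. env_elem X (moving_basis HE b u n) (moving_basis HE b u n))"
proof -
  let ?f = "moving_basis HE b u"
  have "(\<Sum>n\<in>UNIV. env_elem X (?f n) (?f n)) $ i $ j = ptraceE X $ i $ j" for i j
  proof -
    have "(\<Sum>n\<in>UNIV. env_elem X (?f n) (?f n)) $ i $ j
        = (\<Sum>n\<in>UNIV. \<Sum>e\<in>UNIV. \<Sum>e'\<in>UNIV. cnj (?f n $ e) * X$(i,e)$(j,e') * ?f n $ e')"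
      by (simp add: env_elem_def sum_component)
    also have "\<dots> = (\<Sum>e\<in>UNIV. \<Sum>n\<in>UNIV. \<Sum>e'\<in>UNIV. cnj (?f n $ e) * X$(i,e)$(j,e') * ?f n $ e')"
      by (rule sum.swap)
    also have "\<dots> = (\<Sum>e\<in>UNIV. \<Sum>e'\<in>UNIV. X$(i,e)$(j,e') * (\<Sum>n\<in>UNIV. ?f n $ e' * cnj (?f n $ e)))"
    proof (rule sum.cong[OF refl])
      fix e
      show "(\<Sum>n\<in>UNIV. \<Sum>e'\<in>UNIV. cnj (?f n $ e) * X$(i,e)$(j,e') * ?f n $ e')
          = (\<Sum>e'\<in>UNIV. X$(i,e)$(j,e') * (\<Sum>n\<in>UNIV. ?f n $ e' * cnj (?f n $ e)))"
        by (subst sum.swap) (simp add: sum_distrib_left algebra_simps)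
    qed
    also have "\<dots> = ptraceE X $ i $ j"
      by (simp add: orthonormal_family_complete[OF orthonormal_family_moving_basis[OF assms]]
          ptraceE_def mult_if_zero sum_if_zero cong: if_cong)
    finally show ?thesis .
  qed
  thus ?thesis by (simp add: vec_eq_iff)
qed

lemma env_elem_kron_state:
  assumes "hermitian HE"
  shows "env_elem (kron A rhoE) (moving_basis HE b s n) (moving_basis HE b s m)
    = msc (braket (b n) (evol HE s ** rhoE ** evol HE (- s)) (b m)) A"
  by (simp add: env_elem_kron moving_basis_def cinner_matrix_vector_mult madj_evol[OF assms]
      matrix_vector_mul_assoc braket_eq_cinner matrix_mul_assoc)

lemma finite_lists_length [simp]: "finite {xs :: 'a::finite list. length xs = k}"
  using finite_lists_length_eq[of "UNIV :: 'a set" k] by simp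

lemma sum_lists_length_Suc:
  "(\<Sum>xs\<in>{xs. length xs = Suc k}. f xs) = (\<Sum>x\<in>(UNIV::'a::finite set). \<Sum>xs\<in>{xs. length xs = k}. f (x # xs))"
proof -
  have "{xs. length xs = Suc k} = case_prod Cons ` (UNIV \<times> {xs :: 'a list. length xs = k})"
    by (auto simp: length_Suc_conv image_iff)
  moreover have "inj_on (case_prod Cons) (UNIV \<times> {xs :: 'a list. length xs = k})"
    by (auto simp: inj_on_def)
  ultimately show ?thesis
    by (simp add: sum.reindex sum.cartesian_product split_def)
qed

text \<open>The summand of q_E without the factor delta_(n_1, m_1).\<close>

definition path_amp :: "'e::finite op \<Rightarrow> 'e op \<Rightarrow> ('e \<Rightarrow> complex^'e) \<Rightarrow> 'e list \<Rightarrow> 'e list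
    \<Rightarrow> real list \<Rightarrow> complex" where
  "path_amp HE rhoE b ns ms ts = (let k = length ts in
     braket (b (ns!(k-1))) (evol HE (ts!(k-1)) ** rhoE ** evol HE (-(ts!(k-1)))) (b (ms!(k-1)))
     * (\<Prod>l<k-1. Tprop HE b (ts!l - ts!(l+1)) (ns!l) (ms!l) (ns!(l+1)) (ms!(l+1))))"

lemma path_amp_singleton:
  "path_amp HE rhoE b [n] [m] [u] = braket (b n) (evol HE u ** rhoE ** evol HE (- u)) (b m)"
  by (simp add: path_amp_def)

lemma path_amp_Cons:
  assumes "length ns = Suc k" "length ms = Suc k" "length ts = Suc k"
  shows "path_amp HE rhoE b (n # ns) (m # ms) (u # ts)
    = Tprop HE b (u - ts!0) n m (ns!0) (ms!0) * path_amp HE rhoE b ns ms ts"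
proof -
  have "(\<Prod>l<Suc k. Tprop HE b ((u # ts)!l - (u # ts)!(l+1)) ((n # ns)!l) ((m # ms)!l) ((n # ns)!(l+1)) ((m # ms)!(l+1)))
      = Tprop HE b (u - ts!0) n m (ns!0) (ms!0) * (\<Prod>l<k. Tprop HE b (ts!l - ts!(l+1)) (ns!l) (ms!l) (ns!(l+1)) (ms!(l+1)))"
    by (subst prod.lessThan_Suc_shift) simp
  thus ?thesis using assms by (simp add: path_amp_def Let_def algebra_simps)
qed

lemma WS_add: "WS HS VS x y t (A + B) = WS HS VS x y t A + WS HS VS x y t B"
  by (simp add: WS_eq matrix_add_ldistrib matrix_add_rdistrib msc_add)

lemma WS_zero: "WS HS VS x y t 0 = 0"
  by (simp add: WS_eq vec_eq_iff msc_def matrix_matrix_mult_def)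

lemma WS_sum: "finite A \<Longrightarrow> WS HS VS x y t (\<Sum>i\<in>A. f i) = (\<Sum>i\<in>A. WS HS VS x y t (f i))"
  by (induction A rule: finite_induct) (simp_all add: WS_zero WS_add)

lemma WS_msc: "WS HS VS x y t (msc c A) = msc c (WS HS VS x y t A)"
  by (simp add: WS_eq msc_matrix_mult_left msc_matrix_mult_right msc_msc msc_diff mult.commute)

lemma env_elem_foldr_int_comm:
  fixes b :: "'e::finite \<Rightarrow> complex^'e" and rhoS :: "'s::finite op"
  assumes "hermitian HE" "hermitian VE" "orthonormal_family b"
    "VE = (\<Sum>n\<in>UNIV. msc (of_real (v n)) (ketbra (b n) (b n)))"
  shows "env_elem (foldr (int_comm HS VS HE VE) (u # ts) (kron rhoS rhoE))
      (moving_basis HE b u n) (moving_basis HE b u m) =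
    (\<Sum>ns\<in>{ns. length ns = length ts}. \<Sum>ms\<in>{ms. length ms = length ts}.
      msc (path_amp HE rhoE b (n # ns) (m # ms) (u # ts))
        (Wcomp HS VS (map v (n # ns)) (map v (m # ms)) (u # ts) rhoS))"
proof (induction ts arbitrary: u n m)
  case Nil
  show ?case
    by (simp add: env_elem_int_comm[OF assms] env_elem_kron_state[OF assms(1)] path_amp_singleton WS_msc)
next
  case (Cons s ts)
  let ?L = "int_comm HS VS HE VE" and ?R = "kron rhoS rhoE" and ?B = "moving_basis HE b"
    and ?T = "\<lambda>n' m'. Tprop HE b (u - s) n m n' m'"
    and ?c = "\<lambda>n' ns m' ms. path_amp HE rhoE b (n' # ns) (m' # ms) (s # ts)"
    and ?W = "\<lambda>n' ns m' ms. Wcomp HS VS (map v (n' # ns)) (map v (m' # ms)) (s # ts) rhoS"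
    and ?Ls = "{ns. length ns = length ts}"
  have "env_elem (foldr ?L (u # s # ts) ?R) (?B u n) (?B u m)
      = WS HS VS (v n) (v m) u (env_elem (foldr ?L (s # ts) ?R) (?B u n) (?B u m))"
    by (simp only: foldr_Cons o_apply env_elem_int_comm[OF assms])
  also have "\<dots> = WS HS VS (v n) (v m) u (\<Sum>n'\<in>UNIV. \<Sum>m'\<in>UNIV. msc (?T n' m')
      (env_elem (foldr ?L (s # ts) ?R) (?B s n') (?B s m')))"
    by (simp only: env_elem_change_basis[OF assms(1,3), of _ u _ _ s])
  also have "\<dots> = (\<Sum>n'\<in>UNIV. \<Sum>m'\<in>UNIV. \<Sum>ns\<in>?Ls. \<Sum>ms\<in>?Ls.
      msc (?T n' m' * ?c n' ns m' ms) (WS HS VS (v n) (v m) u (?W n' ns m' ms)))"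
    by (simp only: Cons.IH) (simp add: WS_sum WS_msc msc_sum msc_msc del: foldr.simps)
  also have "\<dots> = (\<Sum>n'\<in>UNIV. \<Sum>ns\<in>?Ls. \<Sum>m'\<in>UNIV. \<Sum>ms\<in>?Ls.
      msc (?T n' m' * ?c n' ns m' ms) (WS HS VS (v n) (v m) u (?W n' ns m' ms)))"
    by (rule sum.cong[OF refl], rule sum.swap)
  also have "\<dots> = (\<Sum>ns\<in>{ns. length ns = length (s # ts)}. \<Sum>ms\<in>{ms. length ms = length (s # ts)}.
      msc (path_amp HE rhoE b (n # ns) (m # ms) (u # s # ts))
        (Wcomp HS VS (map v (n # ns)) (map v (m # ms)) (u # s # ts) rhoS))"
  proof -
    have "path_amp HE rhoE b (n # n' # ns) (m # m' # ms) (u # s # ts) = ?T n' m' * ?c n' ns m' ms"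
      if "ns \<in> ?Ls" "ms \<in> ?Ls" for n' m' ns ms
      using that path_amp_Cons[of "n' # ns" "length ts" "m' # ms" "s # ts" HE rhoE b n m u] by simp
    thus ?thesis
      unfolding length_Cons sum_lists_length_Suc by (intro sum.cong refl) simp
  qed
  finally show ?case .
qed

lemma sum_diag_Cons:
  "(\<Sum>ns\<in>{ns. length ns = Suc k}. \<Sum>ms\<in>{ms. length ms = Suc k}. (if ns!0 = ms!0 then 1 else 0) * F ns ms)
    = (\<Sum>n\<in>(UNIV::'e::finite set). \<Sum>ns\<in>{ns. length ns = k}. \<Sum>ms\<in>{ms. length ms = k}.
        (F (n # ns) (n # ms) :: complex))"
  by (simp add: sum_lists_length_Suc mult_if_zero sum_if_zero cong: if_cong)

lemma ptraceE_foldr_int_comm: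
  fixes b :: "'e::finite \<Rightarrow> complex^'e" and rhoS :: "'s::finite op"
  assumes "hermitian HE" "hermitian VE" "orthonormal_family b"
    "VE = (\<Sum>n\<in>UNIV. msc (of_real (v n)) (ketbra (b n) (b n)))"
  shows "ptraceE (foldr (int_comm HS VS HE VE) (u # ts) (kron rhoS rhoE)) $ i $ j =
    (\<Sum>ns\<in>{ns. length ns = Suc (length ts)}. \<Sum>ms\<in>{ms. length ms = Suc (length ts)}.
      (if ns!0 = ms!0 then 1 else 0) * (path_amp HE rhoE b ns ms (u # ts)
        * Wcomp HS VS (map v ns) (map v ms) (u # ts) rhoS $ i $ j))"
  unfolding sum_diag_Cons
  by (simp add: ptraceE_eq_sum_env_elem[OF assms(1,3), of _ u] env_elem_foldr_int_comm[OF assms]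
      msc_def sum_component del: Wcomp.simps foldr.simps)

definition label_fiber :: "('e \<Rightarrow> real) \<Rightarrow> real list \<Rightarrow> 'e list set" where
  "label_fiber v xs = {ns. length ns = length xs \<and> (\<forall>l<length xs. v (ns!l) = xs!l)}"

lemma qE_eq_path_amp:
  "length xs = length ts \<Longrightarrow> length ys = length ts \<Longrightarrow>
   qE HE rhoE b v xs ys ts = (\<Sum>ns\<in>label_fiber v xs. \<Sum>ms\<in>label_fiber v ys.
     (if ns!0 = ms!0 then 1 else 0) * path_amp HE rhoE b ns ms ts)"
  by (simp add: qE_def path_amp_def Let_def label_fiber_def mult.assoc)

lemma sum_label_fibers:
  fixes v :: "'e::finite \<Rightarrow> real"
  shows "(\<Sum>xs\<in>{xs. length xs = k \<and> set xs \<subseteq> range v}. \<Sum>ns\<in>label_fiber v xs. f xs ns)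
    = (\<Sum>ns\<in>{ns. length ns = k}. f (map v ns) ns)"
proof -
  let ?X = "{xs. length xs = k \<and> set xs \<subseteq> range v}" and ?Ls = "{ns :: 'e list. length ns = k}"
  have "finite ?X"
    using finite_lists_length_eq[of "range v" k] by (simp add: conj_commute)
  have "(\<Sum>xs\<in>?X. \<Sum>ns\<in>label_fiber v xs. f xs ns) = (\<Sum>xs\<in>?X. \<Sum>ns\<in>{ns\<in>?Ls. map v ns = xs}. f xs ns)"
    by (intro sum.cong refl) (auto simp: label_fiber_def list_eq_iff_nth_eq)
  also have "\<dots> = (\<Sum>ns\<in>?Ls. \<Sum>xs\<in>{xs\<in>?X. map v ns = xs}. f xs ns)"
    by (rule sum.swap_restrict[OF \<open>finite ?X\<close> finite_lists_length])
  also have "\<dots> = (\<Sum>ns\<in>?Ls. f (map v ns) ns)"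
  proof (intro sum.cong refl)
    fix ns :: "'e list" assume "ns \<in> ?Ls"
    hence "{xs\<in>?X. map v ns = xs} = {map v ns}" by auto
    thus "(\<Sum>xs\<in>{xs\<in>?X. map v ns = xs}. f xs ns) = f (map v ns) ns" by simp
  qed
  finally show ?thesis .
qed

lemma dyson_integrand_eq:
  fixes v :: "'e::finite \<Rightarrow> real" and b :: "'e \<Rightarrow> complex^'e"
  assumes "length ts = k" "k \<ge> 1"
  shows "(\<Sum>xs\<in>{xs. length xs = k \<and> set xs \<subseteq> range v}. \<Sum>ys\<in>{ys. length ys = k \<and> set ys \<subseteq> range v}.
      (if xs!0 = ys!0 then 1 else 0) * qE HE rhoE b v xs ys ts * (Wcomp HS VS xs ys ts rhoS) $ i $ j)
    = (\<Sum>ns\<in>{ns. length ns = k}. \<Sum>ms\<in>{ms. length ms = k}. (if ns!0 = ms!0 then 1 else 0)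
        * (path_amp HE rhoE b ns ms ts * Wcomp HS VS (map v ns) (map v ms) ts rhoS $ i $ j))"
proof -
  let ?X = "{xs. length xs = k \<and> set xs \<subseteq> range v}"
  let ?F = "\<lambda>xs ns ys ms. (if xs!0 = ys!0 then 1 else 0) * ((if ns!0 = ms!0 then 1 else 0)
      * path_amp HE rhoE b ns ms ts) * (Wcomp HS VS xs ys ts rhoS) $ i $ j"
  have "(\<Sum>xs\<in>?X. \<Sum>ys\<in>?X. (if xs!0 = ys!0 then 1 else 0) * qE HE rhoE b v xs ys ts * (Wcomp HS VS xs ys ts rhoS) $ i $ j)
      = (\<Sum>xs\<in>?X. \<Sum>ns\<in>label_fiber v xs. \<Sum>ys\<in>?X. \<Sum>ms\<in>label_fiber v ys. ?F xs ns ys ms)"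
    using assms(1) by (intro sum.cong refl) (simp add: qE_eq_path_amp sum_distrib_left sum_distrib_right,
        rule sum.swap)
  also have "\<dots> = (\<Sum>ns\<in>{ns. length ns = k}. \<Sum>ms\<in>{ms. length ms = k}. ?F (map v ns) ns (map v ms) ms)"
    by (simp only: sum_label_fibers)
  also have "\<dots> = (\<Sum>ns\<in>{ns. length ns = k}. \<Sum>ms\<in>{ms. length ms = k}. (if ns!0 = ms!0 then 1 else 0)
        * (path_amp HE rhoE b ns ms ts * Wcomp HS VS (map v ns) (map v ms) ts rhoS $ i $ j))"
    using assms(2) by (intro sum.cong refl) (auto simp: hd_conv_nth[symmetric])
  finally show ?thesis .
qed

lemma iterint_cong:
  "(\<And>ts. length ts = n \<Longrightarrow> F ts = G ts) \<Longrightarrow> iterint n s F = iterint n s G"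
proof (induction n arbitrary: s F G)
  case 0
  thus ?case by simp
next
  case (Suc n)
  show ?case
    by (simp, rule integral_cong, rule Suc.IH) (simp add: Suc.prems)
qed

subsection \<open>The Dyson series of the reduced state\<close>

lemma volterra_kernel_int_comm: "volterra_kernel (int_comm HS VS HE VE) T"
proof
  show "int_comm HS VS HE VE s (X + Y) = int_comm HS VS HE VE s X + int_comm HS VS HE VE s Y" for s X Y
    by (simp add: int_comm_def matrix_add_ldistrib matrix_add_rdistrib)
  show "int_comm HS VS HE VE s (msc c X) = msc c (int_comm HS VS HE VE s X)" for s c X
    by (simp add: int_comm_def msc_matrix_mult_left msc_matrix_mult_right msc_diff)
qed (rule continuous_on_int_comm)

lemma int_comm_bounded:
  fixes HS VS :: "'s::finite op" and HE VE :: "'e::finite op"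
  shows "\<exists>C\<ge>0. \<forall>s\<in>{0..T}. \<forall>X. norm (int_comm HS VS HE VE s X) \<le> C * norm X"
proof -
  obtain K where K: "\<And>a b. norm ((a::('s \<times> 'e) op) ** (b::('s \<times> 'e) op)) \<le> norm a * norm b * K" and "0 < K"
    using bounded_bilinear.pos_bounded[OF matrix_mult_bounded_bilinear] by blast
  have "bounded ((\<lambda>t. int_ham HS VS HE VE t) ` {0..T})"
    by (intro compact_imp_bounded compact_continuous_image continuous_on_int_ham compact_Icc)
  then obtain h where h: "\<forall>s\<in>{0..T}. norm (int_ham HS VS HE VE s) \<le> h"
    by (auto simp: bounded_iff)
  have "norm (int_comm HS VS HE VE s X) \<le> 2 * max h 0 * K * norm X" if "s \<in> {0..T}" for s X
  proof -
    have hs: "norm (int_ham HS VS HE VE s) \<le> max h 0"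
      using h that by fastforce
    have "norm (int_comm HS VS HE VE s X) \<le> norm (int_ham HS VS HE VE s ** X) + norm (X ** int_ham HS VS HE VE s)"
      unfolding int_comm_def by (rule norm_triangle_ineq4)
    also have "\<dots> \<le> norm (int_ham HS VS HE VE s) * norm X * K + norm X * norm (int_ham HS VS HE VE s) * K"
      by (intro add_mono K)
    also have "\<dots> \<le> max h 0 * norm X * K + norm X * max h 0 * K"
      using \<open>0 < K\<close> hs by (intro add_mono mult_right_mono mult_left_mono) auto
    finally show ?thesis by (simp add: algebra_simps)
  qed
  moreover have "0 \<le> 2 * max h 0 * K"
    using \<open>0 < K\<close> by simp
  ultimately show ?thesis by blast
qed

lemma volterra_equation_int_state:
  "volterra_equation (int_comm HS VS HE VE) T (int_state HS VS HE VE r)"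
  by (intro volterra_equation.intro volterra_kernel_int_comm volterra_equation_axioms.intro
      int_comm_bounded continuous_on_int_state)
    (simp add: int_state_zero int_state_integral_eq)

lemma dyson_term_eq:
  fixes b :: "'e::finite \<Rightarrow> complex^'e" and rhoS :: "'s::finite op"
  assumes "hermitian HE" "hermitian VE" "density rhoE" "orthonormal_family b"
    "VE = (\<Sum>n\<in>UNIV. msc (of_real (v n)) (ketbra (b n) (b n)))" "0 \<le> t"
  shows "dyson_term HS VS HE VE rhoS rhoE b v t k i j
    = (- \<i>)^k * ptraceE (volterra_iter (int_comm HS VS HE VE) (\<lambda>_. kron rhoS rhoE) k t) $ i $ j"
proof (cases k)
  case 0
  with assms(3) show ?thesis
    by (simp add: dyson_term_def ptraceE_kron density_def msc_def)
next
  case (Suc k')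
  let ?G = "\<lambda>ts. \<Sum>xs\<in>{xs. length xs = k \<and> set xs \<subseteq> range v}.
    \<Sum>ys\<in>{ys. length ys = k \<and> set ys \<subseteq> range v}.
      (if xs!0 = ys!0 then 1 else 0) * qE HE rhoE b v xs ys ts * (Wcomp HS VS xs ys ts rhoS)$i$j"
  have "?G ts = ptraceE (foldr (int_comm HS VS HE VE) ts (kron rhoS rhoE)) $ i $ j"
    if len: "length ts = k" for ts
  proof -
    obtain u ts' where "ts = u # ts'" "length ts' = k'"
      using len Suc by (auto simp: length_Suc_conv)
    thus ?thesis
      using dyson_integrand_eq[OF len] ptraceE_foldr_int_comm[OF assms(1,2,4,5), where u=u and ts=ts' and i=i and j=j]
        Suc by (simp del: foldr.simps Wcomp.simps)
  qed
  hence "iterint k t ?G = iterint k t (\<lambda>ts. ptraceE (foldr (int_comm HS VS HE VE) ts (kron rhoS rhoE)) $ i $ j)"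
    by (rule iterint_cong)
  also have "\<dots> = ptraceE (volterra_iter (int_comm HS VS HE VE) (\<lambda>_. kron rhoS rhoE) k t) $ i $ j"
    using assms(6)
    by (intro volterra_kernel.iterint_foldr_kernel[OF volterra_kernel_int_comm, where T=t]
        bounded_linear_ptraceE_entry) simp
  finally show ?thesis
    using Suc by (simp add: dyson_term_def)
qed

theorem mainTheorem1:
  fixes HS VS rhoS :: "'s::finite op"
    and HE VE rhoE :: "'e::finite op"
    and b :: "'e \<Rightarrow> complex^'e" and v :: "'e \<Rightarrow> real"
    and t :: real
  assumes "hermitian HS" and "hermitian VS" and "hermitian HE" and "hermitian VE"
    and "density rhoS" and "density rhoE"
    and "orthonormal_family b"
    and "VE = (\<Sum>n\<in>UNIV. msc (of_real (v n)) (ketbra (b n) (b n)))"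
    and "0 \<le> t"
  shows "\<forall>i j. (\<lambda>k. dyson_term HS VS HE VE rhoS rhoE b v t k i j)
                  sums (rhoSI HS VS HE VE rhoS rhoE t $ i $ j)"
proof (intro allI)
  fix i j
  let ?P = "int_state HS VS HE VE (kron rhoS rhoE)"
  have "(\<lambda>k. (- \<i>)^k * ptraceE (volterra_iter (int_comm HS VS HE VE) (\<lambda>_. ?P 0) k t) $ i $ j)
      sums ptraceE (?P t) $ i $ j"
    using assms(9)
    by (intro volterra_equation.dyson_series_sums[OF volterra_equation_int_state, where T=t]
        bounded_linear_ptraceE_entry) (simp_all add: ptraceE_def msc_def sum_distrib_left)
  thus "(\<lambda>k. dyson_term HS VS HE VE rhoS rhoE b v t k i j) sums (rhoSI HS VS HE VE rhoS rhoE t $ i $ j)"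
    by (simp add: int_state_zero rhoSI_eq_ptraceE_int_state dyson_term_eq[OF assms(3,4,6,7,8,9)])
qed

end
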